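(* Let $\rho>0$, $v\in[0,1]$, $(l,m,n)\in\mathbb{Z}_+^3\setminus\{\mathbf 0\}$, $t\ge0$ and $p,q,g\in[0,1]$. Then $\mathbb{E}_{l,m,n,0}[p^{a(t)}q^{b(t)}g^{c(t)}v^{s(t)}]=\mathbb{E}_{l,m,n,0}\Bigl[p^{a_v(t)}q^{b_v(t)}g^{c_v(t)}\exp\Bigl\{-\frac{\rho(1-v)}{2}\int_0^t c_v(u)\,du\Bigr\}\Bigr]$.
   Context: The ancestral chain $(a(t),b(t),c(t))$ with parameter $\rho$ is the continuous-time Markov chain on $\mathbb{Z}_+^3\setminus\{\mathbf 0\}$ which from $(a,b,c)$ jumps to $(a+1,b+1,c-1)$ at rate $c\rho/2$ (a recombination event), to $(a-1,b-1,c+1)$ at rate $ab$, to $(a-1,b,c)$ at rate $ac+a(a-1)/2$, to $(a,b-1,c)$ at rate $bc+b(b-1)/2$, and to $(a,b,c-1)$ at rate $c(c-1)/2$. $s(t)$ is the number of recombination jumps (jumps of type $(a,b,c)\to(a+1,b+1,c-1)$) in the time interval $(0,t)$, and $\mathbb{E}_{l,m,n,0}$ denotes expectation with $(a(0),b(0),c(0))=(l,m,n)$, $s(0)=0$. $(a_v(t),b_v(t),c_v(t))$ denotes the same chain with $\rho$ replaced by $v\rho$ (recombination fraction $r$ replaced by $rv$), started at $(l,m,n)$. *)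

theory Defs
  imports "HOL-Probability.Probability"
begin

type_synonym anc_state = "nat \<times> nat \<times> nat"

text \<open>The possible transitions from (a,b,c) with parameter rho, as a list of
  (rate, target state, is-a-recombination-jump).  Targets with nat
  subtraction only matter when their rate is positive.\<close>
definition anc_moves :: "real \<Rightarrow> anc_state \<Rightarrow> (real \<times> anc_state \<times> bool) list" where
  "anc_moves \<rho> x = (case x of (a, b, c) \<Rightarrow>
     [ (real c * \<rho> / 2,                                (a + 1, b + 1, c - 1), True),
       (real a * real b,                                (a - 1, b - 1, c + 1), False),
       (real a * real c + real a * (real a - 1) / 2,    (a - 1, b, c),         False),
       (real b * real c + real b * (real b - 1) / 2,    (a, b - 1, c),         False),
       (real c * (real c - 1) / 2,                      (a, b, c - 1),         False) ])"

definition anc_total_rate :: "real \<Rightarrow> anc_state \<Rightarrow> real" where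
  "anc_total_rate \<rho> x = (\<Sum>i<length (anc_moves \<rho> x). fst (anc_moves \<rho> x ! i))"

definition anc_cum :: "real \<Rightarrow> anc_state \<Rightarrow> nat \<Rightarrow> real" where
  "anc_cum \<rho> x i = (\<Sum>j<i. fst (anc_moves \<rho> x ! j))"

text \<open>One step of the jump chain driven by a pair (U, E) with U uniform on [0,1]
  and E standard exponential: the next move is move i with probability
  rate_i / total, the holding time is E / total.  If the total rate is 0 the
  state is absorbing; we then make a dummy self-transition (no recombination),
  which does not change the process.\<close>
definition anc_step :: "real \<Rightarrow> anc_state \<Rightarrow> real \<times> real \<Rightarrow> anc_state \<times> real \<times> bool" where
  "anc_step \<rho> x ue = (let (u, e) = ue; Q = anc_total_rate \<rho> x; ms = anc_moves \<rho> x in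
     if Q \<le> 0 then (x, e, False)
     else if (\<exists>i<length ms. u * Q < anc_cum \<rho> x (Suc i))
       then (let i = (LEAST i. i < length ms \<and> u * Q < anc_cum \<rho> x (Suc i))
             in (fst (snd (ms ! i)), e / Q, snd (snd (ms ! i))))
       else (x, e / Q, False))"

definition anc_noise :: "(real \<times> real) measure" where
  "anc_noise = uniform_measure lborel {0..1} \<Otimes>\<^sub>M density lborel (exponential_density 1)"

definition anc_Omega :: "(nat \<Rightarrow> real \<times> real) measure" where
  "anc_Omega = PiM UNIV (\<lambda>_. anc_noise)"

fun anc_path :: "real \<Rightarrow> anc_state \<Rightarrow> (nat \<Rightarrow> real \<times> real) \<Rightarrow> nat \<Rightarrow> anc_state" where
  "anc_path \<rho> x0 \<omega> 0 = x0"
| "anc_path \<rho> x0 \<omega> (Suc k) = fst (anc_step \<rho> (anc_path \<rho> x0 \<omega> k) (\<omega> k))"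

definition anc_hold :: "real \<Rightarrow> anc_state \<Rightarrow> (nat \<Rightarrow> real \<times> real) \<Rightarrow> nat \<Rightarrow> real" where
  "anc_hold \<rho> x0 \<omega> k = fst (snd (anc_step \<rho> (anc_path \<rho> x0 \<omega> k) (\<omega> k)))"

definition anc_recomb :: "real \<Rightarrow> anc_state \<Rightarrow> (nat \<Rightarrow> real \<times> real) \<Rightarrow> nat \<Rightarrow> bool" where
  "anc_recomb \<rho> x0 \<omega> k = snd (snd (anc_step \<rho> (anc_path \<rho> x0 \<omega> k) (\<omega> k)))"

definition anc_jtime :: "real \<Rightarrow> anc_state \<Rightarrow> (nat \<Rightarrow> real \<times> real) \<Rightarrow> nat \<Rightarrow> real" where
  "anc_jtime \<rho> x0 \<omega> k = (\<Sum>i<k. anc_hold \<rho> x0 \<omega> i)"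

text \<open>Number of jumps that occurred up to time t (index of the current state).
  (On the null event of explosion this is arbitrary.)\<close>
definition anc_index :: "real \<Rightarrow> anc_state \<Rightarrow> (nat \<Rightarrow> real \<times> real) \<Rightarrow> real \<Rightarrow> nat" where
  "anc_index \<rho> x0 \<omega> t = (LEAST k. t < anc_jtime \<rho> x0 \<omega> (Suc k))"

definition anc_chain :: "real \<Rightarrow> anc_state \<Rightarrow> (nat \<Rightarrow> real \<times> real) \<Rightarrow> real \<Rightarrow> anc_state" where
  "anc_chain \<rho> x0 \<omega> t = anc_path \<rho> x0 \<omega> (anc_index \<rho> x0 \<omega> t)"

definition anc_a :: "real \<Rightarrow> anc_state \<Rightarrow> (nat \<Rightarrow> real \<times> real) \<Rightarrow> real \<Rightarrow> nat" where
  "anc_a \<rho> x0 \<omega> t = fst (anc_chain \<rho> x0 \<omega> t)"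
definition anc_b :: "real \<Rightarrow> anc_state \<Rightarrow> (nat \<Rightarrow> real \<times> real) \<Rightarrow> real \<Rightarrow> nat" where
  "anc_b \<rho> x0 \<omega> t = fst (snd (anc_chain \<rho> x0 \<omega> t))"
definition anc_c :: "real \<Rightarrow> anc_state \<Rightarrow> (nat \<Rightarrow> real \<times> real) \<Rightarrow> real \<Rightarrow> nat" where
  "anc_c \<rho> x0 \<omega> t = snd (snd (anc_chain \<rho> x0 \<omega> t))"

definition anc_s :: "real \<Rightarrow> anc_state \<Rightarrow> (nat \<Rightarrow> real \<times> real) \<Rightarrow> real \<Rightarrow> nat" where
  "anc_s \<rho> x0 \<omega> t = card {k. k < anc_index \<rho> x0 \<omega> t \<and> anc_recomb \<rho> x0 \<omega> k}"

end

theory Submission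
  imports Defs
begin

text \<open>Conditioning on the first jump, both sides, as functions \<open>E x t\<close> of the initial state
  and the time, satisfy the same renewal equation. On the left the factor \<open>v^s(t)\<close> turns the
  recombination rate \<open>c \<rho> / 2\<close> into \<open>c v \<rho> / 2\<close>, the rate of the \<open>v \<rho>\<close>-chain; on the right
  the killing \<open>exp (- \<rho> (1 - v) / 2 \<integral> c)\<close> raises the exit rate of the \<open>v \<rho>\<close>-chain back to
  the total rate of the \<open>\<rho>\<close>-chain. Two solutions bounded by 1 differ after \<open>n\<close> iterations of the
  equation by at most \<open>(3/4)^n e^(\<beta> t) 2^(a+b+c)\<close> with \<open>\<beta> = (5 \<rho> + 1)^2\<close>, because the weight
  \<open>2^(a+b+c)\<close> satisfies a drift inequality. The same estimate shows that the chain does not explode, which is what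
  justifies the first-jump decomposition.\<close>

lemma length_anc_moves [simp]: "length (anc_moves r x) = 5"
  by (simp add: anc_moves_def split: prod.splits)

text \<open>The value 5 encodes the dummy self-transition of \<open>anc_step\<close>.\<close>
definition anc_move_index :: "real \<Rightarrow> anc_state \<Rightarrow> real \<Rightarrow> nat" where
  "anc_move_index r x u = (if anc_total_rate r x \<le> 0 then 5 else
     if (\<exists>i<5. u * anc_total_rate r x < anc_cum r x (Suc i))
     then (LEAST i. i < 5 \<and> u * anc_total_rate r x < anc_cum r x (Suc i)) else 5)"

lemma measurable_anc_move_index [measurable]: "anc_move_index r x \<in> borel \<rightarrow>\<^sub>M count_space UNIV"
  unfolding anc_move_index_def by measurable

lemma anc_step_eq: "anc_step r x (u, e) = (let i = anc_move_index r x u in if i < 5 then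
   (fst (snd (anc_moves r x ! i)), e / anc_total_rate r x, snd (snd (anc_moves r x ! i)))
   else (x, if anc_total_rate r x \<le> 0 then e else e / anc_total_rate r x, False))"
proof -
  have "(\<exists>i<5. u * anc_total_rate r x < anc_cum r x (Suc i)) \<Longrightarrow>
     (LEAST i. i < 5 \<and> u * anc_total_rate r x < anc_cum r x (Suc i)) < 5"
    by (metis (mono_tags, lifting) LeastI_ex)
  then show ?thesis unfolding anc_step_def anc_move_index_def Let_def by auto
qed

lemma anc_step_absorbing: "anc_total_rate r x \<le> 0 \<Longrightarrow> anc_step r x z = (x, snd z, False)"
  by (cases z) (simp add: anc_step_def)

lemma measurable_anc_step [measurable]:
  "anc_step r x \<in> borel \<Otimes>\<^sub>M borel \<rightarrow>\<^sub>M count_space UNIV \<Otimes>\<^sub>M borel \<Otimes>\<^sub>M count_space UNIV"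
proof -
  have "anc_step r x = (\<lambda>z. (\<lambda>i z. if i < 5 then
     (fst (snd (anc_moves r x ! i)), snd z / anc_total_rate r x, snd (snd (anc_moves r x ! i)))
     else (x, if anc_total_rate r x \<le> 0 then snd z else snd z / anc_total_rate r x, False))
     (anc_move_index r x (fst z)) z)"
    by (auto simp: anc_step_eq Let_def fun_eq_iff)
  also have "\<dots> \<in> borel \<Otimes>\<^sub>M borel \<rightarrow>\<^sub>M count_space UNIV \<Otimes>\<^sub>M borel \<Otimes>\<^sub>M count_space UNIV"
    by (rule measurable_compose_countable[where g="\<lambda>z. anc_move_index r x (fst z)"]) measurable
  finally show ?thesis .
qed

lemma sets_anc_noise: "sets anc_noise = sets (borel \<Otimes>\<^sub>M borel)"
  unfolding anc_noise_def by (intro sets_pair_measure_cong) auto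

lemma space_anc_noise: "space anc_noise = UNIV"
  using sets_eq_imp_space_eq[OF sets_anc_noise] by (simp add: space_pair_measure)

lemma space_anc_Omega: "space anc_Omega = UNIV"
  unfolding anc_Omega_def by (simp add: space_PiM space_anc_noise)

lemma measurable_anc_step_noise [measurable]:
  "anc_step r x \<in> anc_noise \<rightarrow>\<^sub>M count_space UNIV \<Otimes>\<^sub>M borel \<Otimes>\<^sub>M count_space UNIV"
  using measurable_anc_step measurable_cong_sets[OF sets_anc_noise refl] by blast

lemma measurable_anc_Omega_component [measurable]: "(\<lambda>\<omega>. \<omega> k) \<in> anc_Omega \<rightarrow>\<^sub>M anc_noise"
  unfolding anc_Omega_def by (rule measurable_component_singleton) simp

lemma measurable_anc_path [measurable]:
  "(\<lambda>\<omega>. anc_path r x \<omega> k) \<in> anc_Omega \<rightarrow>\<^sub>M count_space UNIV"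
proof (induction k)
  case (Suc k)
  have "(\<lambda>\<omega>. (\<lambda>y \<omega>. fst (anc_step r y (\<omega> k))) (anc_path r x \<omega> k) \<omega>) \<in> anc_Omega \<rightarrow>\<^sub>M count_space UNIV"
    by (rule measurable_compose_countable[OF _ Suc]) measurable
  then show ?case by simp
qed simp

lemma measurable_anc_step_path [measurable]:
  "(\<lambda>\<omega>. anc_step r (anc_path r x \<omega> k) (\<omega> k))
     \<in> anc_Omega \<rightarrow>\<^sub>M count_space UNIV \<Otimes>\<^sub>M borel \<Otimes>\<^sub>M count_space UNIV"
  by (rule measurable_compose_countable[OF _ measurable_anc_path]) measurable

lemma measurable_anc_hold [measurable]: "(\<lambda>\<omega>. anc_hold r x \<omega> k) \<in> borel_measurable anc_Omega"
  unfolding anc_hold_def by measurable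

lemma measurable_anc_recomb [measurable]:
  "(\<lambda>\<omega>. anc_recomb r x \<omega> k) \<in> anc_Omega \<rightarrow>\<^sub>M count_space UNIV"
  unfolding anc_recomb_def by measurable

lemma measurable_anc_jtime [measurable]: "(\<lambda>\<omega>. anc_jtime r x \<omega> k) \<in> borel_measurable anc_Omega"
  unfolding anc_jtime_def by measurable

lemma sets_anc_jtime_le [measurable]: "{\<omega>. anc_jtime r x \<omega> k \<le> t} \<in> sets anc_Omega"
proof -
  have "{\<omega> \<in> space anc_Omega. anc_jtime r x \<omega> k \<le> t} \<in> sets anc_Omega" by measurable
  then show ?thesis by (simp add: space_anc_Omega)
qed

section \<open>Restarting the chain after the first jump\<close>

lemma anc_path_case_nat_Suc:
  "anc_path r x (case_nat z \<omega>) (Suc k) = anc_path r (fst (anc_step r x z)) \<omega> k"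
  by (induction k) auto

lemma anc_path_absorbing: "anc_total_rate r x \<le> 0 \<Longrightarrow> anc_path r x \<omega> k = x"
  by (induction k) (auto simp: anc_step_absorbing)

lemma anc_jtime_case_nat_Suc:
  "anc_jtime r x (case_nat z \<omega>) (Suc k) = fst (snd (anc_step r x z)) + anc_jtime r (fst (anc_step r x z)) \<omega> k"
proof -
  have "anc_hold r x (case_nat z \<omega>) (Suc i) = anc_hold r (fst (anc_step r x z)) \<omega> i" for i
    unfolding anc_hold_def anc_path_case_nat_Suc by simp
  then show ?thesis
    unfolding anc_jtime_def sum.lessThan_Suc_shift by (simp add: anc_hold_def)
qed

lemma card_less_Suc_filter:
  "card {k. k < Suc n \<and> P k} = (if P 0 then 1 else 0) + card {k. k < n \<and> P (Suc k)}"
proof -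
  have "{k. k < Suc n \<and> P k} = (if P 0 then insert 0 else id) (Suc ` {k. k < n \<and> P (Suc k)})"
    by (auto simp: image_iff less_Suc_eq_0_disj)
  moreover have "card (Suc ` {k. k < n \<and> P (Suc k)}) = card {k. k < n \<and> P (Suc k)}"
    by (rule card_image) simp
  ultimately show ?thesis by auto
qed

context
  fixes r :: real and x :: anc_state and z :: "real \<times> real" and \<omega> :: "nat \<Rightarrow> real \<times> real"
begin

lemma anc_index_before_jump:
  "t < fst (snd (anc_step r x z)) \<Longrightarrow> anc_index r x (case_nat z \<omega>) t = 0"
  unfolding anc_index_def using anc_jtime_case_nat_Suc[of r x z \<omega> 0]
  by (intro Least_equality) (auto simp: anc_jtime_def)

lemma anc_index_after_jump:
  assumes "fst (snd (anc_step r x z)) \<le> t"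
    and "\<exists>k. t - fst (snd (anc_step r x z)) < anc_jtime r (fst (anc_step r x z)) \<omega> (Suc k)"
  shows "anc_index r x (case_nat z \<omega>) t
     = Suc (anc_index r (fst (anc_step r x z)) \<omega> (t - fst (snd (anc_step r x z))))"
proof -
  obtain k where "t - fst (snd (anc_step r x z)) < anc_jtime r (fst (anc_step r x z)) \<omega> (Suc k)"
    using assms(2) by blast
  then have "t < anc_jtime r x (case_nat z \<omega>) (Suc (Suc k))"
    using anc_jtime_case_nat_Suc[of r x z \<omega> "Suc k"] by simp
  moreover have "\<not> t < anc_jtime r x (case_nat z \<omega>) (Suc 0)"
    using assms(1) anc_jtime_case_nat_Suc[of r x z \<omega> 0] by (simp add: anc_jtime_def)
  ultimately show ?thesis
    unfolding anc_index_def
    by (subst Least_Suc) (simp_all add: anc_jtime_case_nat_Suc diff_less_eq add.commute)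
qed

lemma anc_chain_before_jump:
  "t < fst (snd (anc_step r x z)) \<Longrightarrow> anc_chain r x (case_nat z \<omega>) t = x"
  unfolding anc_chain_def by (simp add: anc_index_before_jump)

lemma anc_s_before_jump: "t < fst (snd (anc_step r x z)) \<Longrightarrow> anc_s r x (case_nat z \<omega>) t = 0"
  unfolding anc_s_def by (simp add: anc_index_before_jump)

lemma anc_chain_after_jump:
  assumes "fst (snd (anc_step r x z)) \<le> t"
    and "\<exists>k. t - fst (snd (anc_step r x z)) < anc_jtime r (fst (anc_step r x z)) \<omega> (Suc k)"
  shows "anc_chain r x (case_nat z \<omega>) t
     = anc_chain r (fst (anc_step r x z)) \<omega> (t - fst (snd (anc_step r x z)))"
  unfolding anc_chain_def anc_index_after_jump[OF assms] anc_path_case_nat_Suc ..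

lemma anc_s_after_jump:
  assumes "fst (snd (anc_step r x z)) \<le> t"
    and "\<exists>k. t - fst (snd (anc_step r x z)) < anc_jtime r (fst (anc_step r x z)) \<omega> (Suc k)"
  shows "anc_s r x (case_nat z \<omega>) t = (if snd (snd (anc_step r x z)) then 1 else 0)
     + anc_s r (fst (anc_step r x z)) \<omega> (t - fst (snd (anc_step r x z)))"
proof -
  have "anc_recomb r x (case_nat z \<omega>) (Suc k) = anc_recomb r (fst (anc_step r x z)) \<omega> k" for k
    unfolding anc_recomb_def by (simp only: anc_path_case_nat_Suc) simp
  then show ?thesis
    unfolding anc_s_def anc_index_after_jump[OF assms] card_less_Suc_filter
    by (simp add: anc_recomb_def)
qed

end

lemma anc_index_mono:
  assumes "u \<le> t" "\<exists>k. t < anc_jtime r x \<omega> (Suc k)"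
  shows "anc_index r x \<omega> u \<le> anc_index r x \<omega> t"
proof -
  have "t < anc_jtime r x \<omega> (Suc (anc_index r x \<omega> t))"
    unfolding anc_index_def using assms(2) by (rule LeastI_ex)
  with assms(1) have "u < anc_jtime r x \<omega> (Suc (anc_index r x \<omega> t))" by simp
  then show ?thesis unfolding anc_index_def by (rule Least_le)
qed

section \<open>Distribution of one step\<close>

abbreviation Unif :: "real measure" where "Unif \<equiv> uniform_measure lborel {0..1}"
abbreviation Expo :: "real measure" where "Expo \<equiv> density lborel (exponential_density 1)"

lemma prob_space_Unif: "prob_space Unif"
  by (rule prob_space_uniform_measure) auto

lemma prob_space_Expo: "prob_space Expo"
  by (rule prob_space_exponential_density) simp

interpretation Unif: prob_space Unif by (rule prob_space_Unif)
interpretation Expo: prob_space Expo by (rule prob_space_Expo)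

interpretation anc_noise: prob_space anc_noise
  unfolding anc_noise_def by (intro prob_space_pair prob_space_Unif prob_space_Expo)

interpretation anc_seq: sequence_space anc_noise
  by unfold_locales

lemma anc_Omega_eq_sequence_space: "anc_Omega = anc_seq.S"
  unfolding anc_Omega_def ..

interpretation anc_Omega: prob_space anc_Omega
  unfolding anc_Omega_eq_sequence_space by (rule anc_seq.P.prob_space_axioms)

lemma anc_moves_rate_nonneg:
  assumes "0 \<le> r" "i < 5"
  shows "0 \<le> fst (anc_moves r x ! i)"
proof -
  obtain a b c where x: "x = (a, b, c)" by (cases x) auto
  have h: "0 \<le> real k * (real k - 1)" for k :: nat by (cases k) auto
  from assms(2) have "i = 0 \<or> i = 1 \<or> i = 2 \<or> i = 3 \<or> i = 4" by auto
  then show ?thesis using assms(1) h[of a] h[of b] h[of c]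
    by (auto simp: x anc_moves_def intro!: add_nonneg_nonneg)
qed

lemma anc_total_rate_nonneg: "0 \<le> r \<Longrightarrow> 0 \<le> anc_total_rate r x"
  unfolding anc_total_rate_def by (intro sum_nonneg) (auto intro: anc_moves_rate_nonneg)

lemma anc_total_rate_eq: "anc_total_rate r (a, b, c)
   = real (a + b + c) * (real (a + b + c) - 1) / 2 + r * real c / 2"
  unfolding anc_total_rate_def by (simp add: anc_moves_def eval_nat_numeral field_simps)

lemma anc_total_rate_eq_cum: "anc_total_rate r x = anc_cum r x 5"
  unfolding anc_total_rate_def anc_cum_def by simp

lemma anc_cum_mono: "0 \<le> r \<Longrightarrow> i \<le> j \<Longrightarrow> j \<le> 5 \<Longrightarrow> anc_cum r x i \<le> anc_cum r x j"
  unfolding anc_cum_def by (intro sum_mono2) (auto intro: anc_moves_rate_nonneg)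

lemma anc_cum_Suc: "anc_cum r x (Suc i) = anc_cum r x i + fst (anc_moves r x ! i)"
  unfolding anc_cum_def by simp

lemma anc_move_index_eq_iff:
  assumes r: "0 \<le> r" and Q: "0 < anc_total_rate r x" and u: "0 \<le> u" "u < 1"
  shows "anc_move_index r x u = i \<longleftrightarrow>
    i < 5 \<and> anc_cum r x i \<le> u * anc_total_rate r x \<and> u * anc_total_rate r x < anc_cum r x (Suc i)"
proof -
  let ?w = "u * anc_total_rate r x"
  let ?P = "\<lambda>i. i < 5 \<and> ?w < anc_cum r x (Suc i)"
  have "?w < anc_cum r x (Suc 4)"
    using u Q anc_total_rate_eq_cum[of r x] by (simp add: mult_less_cancel_right2 eval_nat_numeral)
  then have ex: "\<exists>i. ?P i" by (intro exI[of _ 4]) auto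
  then have idx: "anc_move_index r x u = (LEAST i. ?P i)" using Q by (simp add: anc_move_index_def)
  show ?thesis
  proof
    assume e: "anc_move_index r x u = i"
    have L: "?P i" using LeastI_ex[OF ex] e idx by auto
    have "anc_cum r x i \<le> ?w"
    proof (cases i)
      case 0 then show ?thesis using u Q by (simp add: anc_cum_def)
    next
      case (Suc j)
      have "\<not> ?P j" using not_less_Least[of j ?P] e idx Suc by auto
      then show ?thesis using Suc L by auto
    qed
    then show "i < 5 \<and> anc_cum r x i \<le> ?w \<and> ?w < anc_cum r x (Suc i)" using L by auto
  next
    assume i: "i < 5 \<and> anc_cum r x i \<le> ?w \<and> ?w < anc_cum r x (Suc i)"
    have "i \<le> j" if "?P j" for j
    proof (rule ccontr)
      assume "\<not> i \<le> j"
      then have "anc_cum r x (Suc j) \<le> anc_cum r x i" using i by (intro anc_cum_mono[OF r]) auto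
      then show False using i that by auto
    qed
    then show "anc_move_index r x u = i" unfolding idx using i by (intro Least_equality) auto
  qed
qed

lemma anc_move_index_lt_5:
  "0 \<le> r \<Longrightarrow> 0 < anc_total_rate r x \<Longrightarrow> 0 \<le> u \<Longrightarrow> u < 1 \<Longrightarrow> anc_move_index r x u < 5"
  using anc_move_index_eq_iff[of r x u "anc_move_index r x u"] by simp

lemma anc_move_index_preimage:
  assumes r: "0 \<le> r" and Q: "0 < anc_total_rate r x" and i: "i < 5"
  shows "{u. anc_move_index r x u = i} \<inter> {0..1}
     = {anc_cum r x i / anc_total_rate r x ..< anc_cum r x (Suc i) / anc_total_rate r x}"
proof -
  let ?Q = "anc_total_rate r x"
  have c0: "0 \<le> anc_cum r x i" using anc_cum_mono[OF r, of 0 i x] i by (simp add: anc_cum_def)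
  have c5: "anc_cum r x (Suc i) \<le> ?Q"
    using anc_cum_mono[OF r, of "Suc i" 5 x] i anc_total_rate_eq_cum[of r x] by simp
  have "\<forall>j<5. anc_cum r x (Suc j) \<le> ?Q"
    using anc_cum_mono[OF r, of "Suc _" 5 x] anc_total_rate_eq_cum[of r x] by auto
  then have one: "anc_move_index r x 1 \<noteq> i"
    using Q i unfolding anc_move_index_def by (auto simp: not_less)
  show ?thesis
  proof (intro set_eqI iffI)
    fix u assume u: "u \<in> {u. anc_move_index r x u = i} \<inter> {0..1}"
    with one have "u \<noteq> 1" by auto
    with u have "0 \<le> u" "u < 1" by auto
    then show "u \<in> {anc_cum r x i / ?Q ..< anc_cum r x (Suc i) / ?Q}"
      using u anc_move_index_eq_iff[OF r Q, of u i] Q by (auto simp: divide_simps mult.commute)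
  next
    fix u assume u: "u \<in> {anc_cum r x i / ?Q ..< anc_cum r x (Suc i) / ?Q}"
    then have w: "anc_cum r x i \<le> u * ?Q" "u * ?Q < anc_cum r x (Suc i)"
      using Q by (auto simp: divide_simps)
    then have "0 \<le> u * ?Q" "u * ?Q < 1 * ?Q" using c0 c5 by linarith+
    then have "0 \<le> u" "u < 1" using Q by (simp_all add: zero_le_mult_iff mult_less_cancel_right)
    then show "u \<in> {u. anc_move_index r x u = i} \<inter> {0..1}"
      using w anc_move_index_eq_iff[OF r Q, of u i] i by auto
  qed
qed

lemma emeasure_anc_move_index:
  assumes r: "0 \<le> r" and Q: "0 < anc_total_rate r x" and i: "i < 5"
  shows "emeasure Unif {u. anc_move_index r x u = i} = ennreal (fst (anc_moves r x ! i) / anc_total_rate r x)"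
proof -
  have "{u. anc_move_index r x u = i} \<in> sets borel"
    using measurable_anc_move_index[of r x]
    by (simp add: measurable_count_space_eq2_countable vimage_def Collect_conj_eq)
  then have "emeasure Unif {u. anc_move_index r x u = i}
      = emeasure lborel ({0..1} \<inter> {u. anc_move_index r x u = i})"
    by (simp add: divide_ennreal_def)
  also have "{0..1} \<inter> {u. anc_move_index r x u = i}
      = {anc_cum r x i / anc_total_rate r x ..< anc_cum r x (Suc i) / anc_total_rate r x}"
    using anc_move_index_preimage[OF assms] by blast
  also have "emeasure lborel \<dots>
      = ennreal (anc_cum r x (Suc i) / anc_total_rate r x - anc_cum r x i / anc_total_rate r x)"
    using anc_cum_mono[OF r, of i "Suc i" x] i Q by (auto simp: divide_right_mono)
  also have "\<dots> = ennreal (fst (anc_moves r x ! i) / anc_total_rate r x)"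
    by (simp add: anc_cum_Suc add_divide_distrib)
  finally show ?thesis .
qed

lemma borel_measurable_countable_fst:
  fixes g :: "'a::countable \<Rightarrow> 'b \<Rightarrow> ennreal"
  assumes "\<And>y. (\<lambda>q. g y q) \<in> borel_measurable M"
  shows "(\<lambda>p. g (fst p) (snd p)) \<in> borel_measurable (count_space UNIV \<Otimes>\<^sub>M M)"
  by (rule measurable_compose_countable[where g=fst]) (use assms in measurable)

lemma nn_integral_anc_noise:
  "g \<in> borel_measurable anc_noise \<Longrightarrow>
   (\<integral>\<^sup>+z. g z \<partial>anc_noise) = (\<integral>\<^sup>+u. \<integral>\<^sup>+e. g (u, e) \<partial>Expo \<partial>Unif)"
  unfolding anc_noise_def by (rule Expo.nn_integral_fst[symmetric]) simp

lemma nn_integral_anc_step_moves: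
  fixes g :: "anc_state \<times> real \<times> bool \<Rightarrow> ennreal"
  assumes r: "0 \<le> r" and Q: "0 < anc_total_rate r x"
    and g[measurable]: "g \<in> borel_measurable (count_space UNIV \<Otimes>\<^sub>M borel \<Otimes>\<^sub>M count_space UNIV)"
  shows "(\<integral>\<^sup>+z. g (anc_step r x z) \<partial>anc_noise) =
    (\<Sum>i<5. ennreal (fst (anc_moves r x ! i) / anc_total_rate r x) *
       (\<integral>\<^sup>+e. g (fst (snd (anc_moves r x ! i)), e / anc_total_rate r x, snd (snd (anc_moves r x ! i))) \<partial>Expo))"
proof -
  define K where "K i = (\<integral>\<^sup>+e. g (fst (snd (anc_moves r x ! i)), e / anc_total_rate r x,
     snd (snd (anc_moves r x ! i))) \<partial>Expo)" for i
  have sets: "{u. anc_move_index r x u = i} \<in> sets Unif" for i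
    using measurable_anc_move_index[of r x]
    by (simp add: measurable_count_space_eq2_countable vimage_def Collect_conj_eq)
  have "AE u in Unif. u \<in> {0..1} \<and> u \<noteq> 1"
  proof (rule AE_uniform_measureI)
    show "AE u in lborel. u \<in> {0..1::real} \<longrightarrow> u \<in> {0..1} \<and> u \<noteq> (1::real)"
      using AE_lborel_singleton[of "1::real"] by (rule AE_mp) (auto intro!: AE_I2)
  qed auto
  then have AE: "AE u in Unif. (\<integral>\<^sup>+e. g (anc_step r x (u, e)) \<partial>Expo)
     = (\<Sum>i<5. K i * indicator {u. anc_move_index r x u = i} u)"
  proof eventually_elim
    case (elim u)
    then have i: "anc_move_index r x u < 5" using anc_move_index_lt_5[OF r Q] by auto
    have "(\<Sum>i<5. K i * indicator {u. anc_move_index r x u = i} u) = K (anc_move_index r x u)"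
      using i by (simp add: indicator_def if_distrib cong: if_cong)
    also have "\<dots> = (\<integral>\<^sup>+e. g (anc_step r x (u, e)) \<partial>Expo)"
      unfolding K_def by (intro nn_integral_cong) (simp add: anc_step_eq i Let_def)
    finally show ?case ..
  qed
  have "(\<integral>\<^sup>+z. g (anc_step r x z) \<partial>anc_noise) = (\<integral>\<^sup>+u. \<integral>\<^sup>+e. g (anc_step r x (u, e)) \<partial>Expo \<partial>Unif)"
    by (rule nn_integral_anc_noise) measurable
  also have "\<dots> = (\<integral>\<^sup>+u. (\<Sum>i<5. K i * indicator {u. anc_move_index r x u = i} u) \<partial>Unif)"
    using AE by (rule nn_integral_cong_AE)
  also have "\<dots> = (\<Sum>i<5. K i * emeasure Unif {u. anc_move_index r x u = i})"
    by (subst nn_integral_sum) (auto simp: sets nn_integral_cmult_indicator)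
  also have "\<dots> = (\<Sum>i<5. ennreal (fst (anc_moves r x ! i) / anc_total_rate r x) * K i)"
    using emeasure_anc_move_index[OF r Q] by (simp add: mult.commute)
  finally show ?thesis unfolding K_def .
qed

lemma nn_integral_Expo_scaled:
  fixes g :: "real \<Rightarrow> ennreal"
  assumes Q: "0 < Q" and g[measurable]: "g \<in> borel_measurable borel"
  shows "(\<integral>\<^sup>+e. g (e / Q) \<partial>Expo)
     = ennreal Q * (\<integral>\<^sup>+h. indicator {0..} h * ennreal (exp (- Q * h)) * g h \<partial>lborel)"
proof -
  have "(\<integral>\<^sup>+e. g (e / Q) \<partial>Expo) = (\<integral>\<^sup>+e. ennreal (exponential_density 1 e) * g (e / Q) \<partial>lborel)"
    by (subst nn_integral_density) auto
  also have "\<dots> = ennreal \<bar>Q\<bar> *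
      (\<integral>\<^sup>+h. ennreal (exponential_density 1 (0 + Q * h)) * g ((0 + Q * h) / Q) \<partial>lborel)"
    using Q by (intro nn_integral_real_affine) auto
  also have "(\<lambda>h. ennreal (exponential_density 1 (0 + Q * h)) * g ((0 + Q * h) / Q))
      = (\<lambda>h. indicator {0..} h * ennreal (exp (- Q * h)) * g h)"
    using Q by (auto simp: fun_eq_iff exponential_density_def indicator_def zero_le_mult_iff
        not_less mult.commute mult_less_0_iff)
  finally show ?thesis using Q by simp
qed

lemma nn_integral_anc_step:
  fixes g :: "anc_state \<times> real \<times> bool \<Rightarrow> ennreal"
  assumes r: "0 \<le> r" and Q: "0 < anc_total_rate r x"
    and g[measurable]: "g \<in> borel_measurable (count_space UNIV \<Otimes>\<^sub>M borel \<Otimes>\<^sub>M count_space UNIV)"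
  shows "(\<integral>\<^sup>+z. g (anc_step r x z) \<partial>anc_noise) =
    (\<Sum>i<5. ennreal (fst (anc_moves r x ! i)) *
       (\<integral>\<^sup>+h. indicator {0..} h * ennreal (exp (- anc_total_rate r x * h))
          * g (fst (snd (anc_moves r x ! i)), h, snd (snd (anc_moves r x ! i))) \<partial>lborel))"
  unfolding nn_integral_anc_step_moves[OF assms]
proof (intro sum.cong refl)
  fix i :: nat assume "i \<in> {..<5}"
  then have "0 \<le> fst (anc_moves r x ! i)" using anc_moves_rate_nonneg[OF r] by simp
  then have rate: "ennreal (fst (anc_moves r x ! i) / anc_total_rate r x) * ennreal (anc_total_rate r x)
      = ennreal (fst (anc_moves r x ! i))"
    using Q by (simp add: ennreal_mult[symmetric])
  show "ennreal (fst (anc_moves r x ! i) / anc_total_rate r x) *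
      (\<integral>\<^sup>+e. g (fst (snd (anc_moves r x ! i)), e / anc_total_rate r x, snd (snd (anc_moves r x ! i))) \<partial>Expo)
    = ennreal (fst (anc_moves r x ! i)) * (\<integral>\<^sup>+h. indicator {0..} h * ennreal (exp (- anc_total_rate r x * h))
        * g (fst (snd (anc_moves r x ! i)), h, snd (snd (anc_moves r x ! i))) \<partial>lborel)"
    by (subst nn_integral_Expo_scaled[OF Q]) (measurable, simp only: mult.assoc[symmetric] rate)
qed

lemma nn_integral_anc_step_absorbing:
  fixes g :: "anc_state \<times> real \<times> bool \<Rightarrow> ennreal"
  assumes Q: "anc_total_rate r x \<le> 0"
    and g[measurable]: "g \<in> borel_measurable (count_space UNIV \<Otimes>\<^sub>M borel \<Otimes>\<^sub>M count_space UNIV)"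
  shows "(\<integral>\<^sup>+z. g (anc_step r x z) \<partial>anc_noise)
     = (\<integral>\<^sup>+h. indicator {0..} h * ennreal (exp (- h)) * g (x, h, False) \<partial>lborel)"
proof -
  have "(\<integral>\<^sup>+z. g (anc_step r x z) \<partial>anc_noise) = (\<integral>\<^sup>+u. \<integral>\<^sup>+e. g (x, e, False) \<partial>Expo \<partial>Unif)"
    by (subst nn_integral_anc_noise) (measurable, simp add: anc_step_absorbing[OF Q])
  also have "\<dots> = (\<integral>\<^sup>+e. ennreal (exponential_density 1 e) * g (x, e, False) \<partial>lborel)"
    by (simp add: Unif.emeasure_space_1 nn_integral_density)
  also have "\<dots> = (\<integral>\<^sup>+h. indicator {0..} h * ennreal (exp (- h)) * g (x, h, False) \<partial>lborel)"
    by (intro nn_integral_cong) (auto simp: exponential_density_def indicator_def)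
  finally show ?thesis .
qed

lemma nn_integral_anc_Omega_case_nat:
  assumes f[measurable]: "f \<in> borel_measurable anc_Omega"
  shows "(\<integral>\<^sup>+\<omega>. f \<omega> \<partial>anc_Omega) = (\<integral>\<^sup>+z. \<integral>\<^sup>+\<omega>. f (case_nat z \<omega>) \<partial>anc_Omega \<partial>anc_noise)"
proof -
  have m: "(\<lambda>(z, \<omega>). case_nat z \<omega>) \<in> anc_noise \<Otimes>\<^sub>M anc_Omega \<rightarrow>\<^sub>M anc_Omega"
    unfolding anc_Omega_eq_sequence_space by measurable
  have "(\<integral>\<^sup>+\<omega>. f \<omega> \<partial>anc_Omega)
      = (\<integral>\<^sup>+\<omega>. f \<omega> \<partial>distr (anc_noise \<Otimes>\<^sub>M anc_Omega) anc_Omega (\<lambda>(z, \<omega>). case_nat z \<omega>))"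
    unfolding anc_Omega_eq_sequence_space anc_seq.PiM_iter ..
  also have "\<dots> = (\<integral>\<^sup>+p. f (case_nat (fst p) (snd p)) \<partial>(anc_noise \<Otimes>\<^sub>M anc_Omega))"
    using m by (subst nn_integral_distr) (auto simp: case_prod_beta)
  also have "\<dots> = (\<integral>\<^sup>+z. \<integral>\<^sup>+\<omega>. f (case_nat z \<omega>) \<partial>anc_Omega \<partial>anc_noise)"
    using m by (subst anc_Omega.nn_integral_fst[symmetric]) (auto simp: case_prod_beta)
  finally show ?thesis .
qed

lemma nn_integral_exp_neg:
  assumes l: "0 < l"
  shows "(\<integral>\<^sup>+h. indicator {0..} h * ennreal (exp (- l * h)) \<partial>lborel) = ennreal (1 / l)"
proof -
  interpret P: prob_space "density lborel (exponential_density l)"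
    by (rule prob_space_exponential_density[OF l])
  have "1 = (\<integral>\<^sup>+h. ennreal (exponential_density l h) \<partial>lborel)"
    using P.emeasure_space_1 by (simp add: emeasure_density)
  also have "\<dots> = (\<integral>\<^sup>+h. ennreal l * (indicator {0..} h * ennreal (exp (- l * h))) \<partial>lborel)"
    using l by (intro nn_integral_cong)
      (auto simp: exponential_density_def indicator_def ennreal_mult mult.commute)
  also have "\<dots> = ennreal l * (\<integral>\<^sup>+h. indicator {0..} h * ennreal (exp (- l * h)) \<partial>lborel)"
    by (subst nn_integral_cmult) auto
  finally have "(\<integral>\<^sup>+h. indicator {0..} h * ennreal (exp (- l * h)) \<partial>lborel) = 1 / ennreal l"
    using l by (metis ennreal_eq_0_iff ennreal_neq_top mult.commute ennreal_mult_divide_eq not_less)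
  then show ?thesis using l by (metis divide_ennreal ennreal_1 zero_le_one)
qed

lemma nn_integral_exp_neg_tail:
  assumes l: "0 < l" and t: "0 \<le> t"
  shows "(\<integral>\<^sup>+h. indicator {t<..} h * ennreal (exp (- l * h)) \<partial>lborel) = ennreal (exp (- l * t) / l)"
proof -
  have "(\<integral>\<^sup>+h. indicator {t<..} h * ennreal (exp (- l * h)) \<partial>lborel)
      = (\<integral>\<^sup>+s. indicator {t<..} (t + s) * ennreal (exp (- l * (t + s))) \<partial>lborel)"
    using nn_integral_real_affine[where f="\<lambda>h. indicator {t<..} h * ennreal (exp (- l * h))" and c=1 and t=t]
    by simp
  also have "\<dots> = (\<integral>\<^sup>+s. ennreal (exp (- l * t)) * (indicator {0..} s * ennreal (exp (- l * s))) \<partial>lborel)"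
  proof (rule nn_integral_cong_AE)
    show "AE s in lborel. indicator {t<..} (t + s) * ennreal (exp (- l * (t + s))) =
        ennreal (exp (- l * t)) * (indicator {0..} s * ennreal (exp (- l * s)))"
      using AE_lborel_singleton[of "0::real"]
      by (rule AE_mp) (auto intro!: AE_I2 simp: indicator_def ennreal_mult[symmetric] mult_exp_exp algebra_simps)
  qed
  also have "\<dots> = ennreal (exp (- l * t)) * ennreal (1 / l)"
    by (subst nn_integral_cmult) (use nn_integral_exp_neg[OF l] in auto)
  finally show ?thesis using l by (simp add: ennreal_mult[symmetric])
qed

lemma nn_integral_exp_neg_mult_exp:
  assumes K: "0 \<le> K" and l: "0 < Q + b"
  shows "(\<integral>\<^sup>+h. indicator {0..} h * ennreal (exp (- Q * h)) * ennreal (K * exp (b * (t - h))) \<partial>lborel)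
    = ennreal (K * exp (b * t) / (Q + b))"
proof -
  have "(\<integral>\<^sup>+h. indicator {0..} h * ennreal (exp (- Q * h)) * ennreal (K * exp (b * (t - h))) \<partial>lborel)
     = (\<integral>\<^sup>+h. ennreal (K * exp (b * t)) * (indicator {0..} h * ennreal (exp (- (Q + b) * h))) \<partial>lborel)"
    using K by (intro nn_integral_cong)
      (auto simp: ennreal_mult[symmetric] mult_exp_exp algebra_simps indicator_def)
  also have "\<dots> = ennreal (K * exp (b * t)) * ennreal (1 / (Q + b))"
    by (subst nn_integral_cmult) (use nn_integral_exp_neg[OF l] in auto)
  finally show ?thesis using K l by (simp add: ennreal_mult[symmetric])
qed

section \<open>A Lyapunov weight and non-explosion\<close>

definition anc_weight :: "anc_state \<Rightarrow> real" where
  "anc_weight y = 2 ^ (fst y + fst (snd y) + snd (snd y))"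

definition anc_growth :: "real \<Rightarrow> real" where
  "anc_growth r = (5 * r + 1)^2"

lemma anc_weight_ge_1: "1 \<le> anc_weight y"
  unfolding anc_weight_def by simp

lemma anc_weight_pos: "0 < anc_weight y"
  unfolding anc_weight_def by simp

lemma anc_growth_ge_1: "0 \<le> r \<Longrightarrow> 1 \<le> anc_growth r"
  unfolding anc_growth_def by (intro one_le_power) simp

lemma anc_recomb_move_weight:
  "fst (anc_moves r x ! 0) * anc_weight (fst (snd (anc_moves r x ! 0)))
     = r * real (snd (snd x)) * anc_weight x"
  by (cases x; cases "snd (snd x)") (auto simp: anc_moves_def anc_weight_def)

lemma anc_coalescence_move_weight:
  assumes "0 < i" "i < 5"
  shows "fst (anc_moves r x ! i) * anc_weight (fst (snd (anc_moves r x ! i)))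
     = fst (anc_moves r x ! i) * anc_weight x / 2"
proof -
  obtain a b c where x: "x = (a, b, c)" by (cases x) auto
  from assms have "i = 1 \<or> i = 2 \<or> i = 3 \<or> i = 4" by auto
  then show ?thesis
    by (elim disjE) (cases a; cases b; cases c; simp add: x anc_moves_def anc_weight_def)+
qed

lemma anc_coalescence_rate:
  "(\<Sum>i\<in>{1..<5}. fst (anc_moves r (a, b, c) ! i))
     = real (a + b + c) * (real (a + b + c) - 1) / 2"
  by (simp add: anc_moves_def eval_nat_numeral atLeastLessThanSuc field_simps)

lemma anc_drift_arith:
  fixes r :: real and c N :: nat
  assumes r: "0 \<le> r" and cN: "c \<le> N"
  shows "r * c + N * (real N - 1) / 4 \<le> 3/4 * (N * (real N - 1) / 2 + r * c / 2 + (5 * r + 1)^2)"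
proof -
  have NN: "0 \<le> real N * (real N - 1)" by (cases N) auto
  have "5 * (r * N) \<le> N * (real N - 1) + 6 * (5 * r + 1)^2"
  proof (cases "N \<le> 5 * r + 1")
    case True
    then have "5 * (r * N) \<le> 5 * (r * (5 * r + 1))" using r by (simp add: mult_left_mono)
    also have "\<dots> \<le> 6 * (5 * r + 1)^2" using r by (simp add: power2_eq_square algebra_simps)
    finally show ?thesis using NN by linarith
  next
    case False
    then have "N * (5 * r) \<le> N * (real N - 1)" by (intro mult_left_mono) auto
    moreover have "5 * (r * N) = N * (5 * r)" by simp
    ultimately show ?thesis using zero_le_power2[of "5 * r + 1"] by linarith
  qed
  moreover have "r * c \<le> r * N" using cN r by (simp add: mult_left_mono)
  moreover have "3/4 * (N * (real N - 1) / 2 + r * c / 2 + (5 * r + 1)^2)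
      = 3/8 * (N * (real N - 1)) + 3/8 * (r * c) + 3/4 * (5 * r + 1)^2"
    by (simp add: algebra_simps)
  ultimately show ?thesis by linarith
qed

text \<open>Every coalescence halves the weight; a recombination doubles it, but occurs at a rate only
  linear in \<open>a+b+c\<close>.\<close>
lemma anc_weight_drift:
  assumes r': "0 \<le> r'" "r' \<le> r"
  shows "(\<Sum>i<5. fst (anc_moves r' x ! i) * anc_weight (fst (snd (anc_moves r' x ! i))))
     \<le> 3/4 * (anc_total_rate r x + anc_growth r) * anc_weight x"
proof -
  obtain a b c where x: "x = (a, b, c)" by (cases x) auto
  define N where "N = a + b + c"
  let ?W = "anc_weight x"
  have "{..<5::nat} = insert 0 {1..<5}" by auto
  then have "(\<Sum>i<5. fst (anc_moves r' x ! i) * anc_weight (fst (snd (anc_moves r' x ! i))))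
      = r' * c * ?W + (\<Sum>i\<in>{1..<5}. fst (anc_moves r' x ! i)) * ?W / 2"
    by (simp add: anc_recomb_move_weight anc_coalescence_move_weight x sum_distrib_right sum_divide_distrib)
  also have "\<dots> = (r' * c + N * (real N - 1) / 4) * ?W"
    unfolding x anc_coalescence_rate N_def by (simp add: algebra_simps)
  also have "\<dots> \<le> (r * c + N * (real N - 1) / 4) * ?W"
    using r' anc_weight_ge_1[of x] by (intro mult_right_mono) (auto intro: mult_right_mono)
  also have "\<dots> \<le> 3/4 * (N * (real N - 1) / 2 + r * c / 2 + (5 * r + 1)^2) * ?W"
    using anc_drift_arith[of r c N] r' anc_weight_ge_1[of x] by (intro mult_right_mono) (auto simp: N_def)
  also have "\<dots> = 3/4 * (anc_total_rate r x + anc_growth r) * ?W"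
    by (simp add: x anc_total_rate_eq anc_growth_def N_def algebra_simps)
  finally show ?thesis .
qed

definition anc_tail_bound :: "real \<Rightarrow> nat \<Rightarrow> anc_state \<Rightarrow> real \<Rightarrow> ennreal" where
  "anc_tail_bound r n x t = ennreal ((3/4)^n * exp (anc_growth r * t) * anc_weight x)"

lemma measurable_anc_tail_bound [measurable]: "anc_tail_bound r n x \<in> borel_measurable borel"
  unfolding anc_tail_bound_def by measurable

lemma anc_tail_bound_0_ge_1:
  assumes "0 \<le> r" "0 \<le> t"
  shows "1 \<le> anc_tail_bound r 0 x t"
proof -
  have "1 \<le> exp (anc_growth r * t)" using assms anc_growth_ge_1[of r] by simp
  then have "1 * 1 \<le> exp (anc_growth r * t) * anc_weight x"
    using anc_weight_ge_1[of x] by (intro mult_mono) auto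
  then show ?thesis unfolding anc_tail_bound_def by (simp add: ennreal_1[symmetric] del: ennreal_1)
qed

lemma anc_tail_bound_tendsto_0: "(\<lambda>n. anc_tail_bound r n x t) \<longlonglongrightarrow> 0"
proof -
  have "(\<lambda>n. (3/4::real)^n * (exp (anc_growth r * t) * anc_weight x)) \<longlonglongrightarrow> 0 * (exp (anc_growth r * t) * anc_weight x)"
    by (intro tendsto_mult tendsto_const LIMSEQ_power_zero) auto
  then have "(\<lambda>n. ennreal ((3/4::real)^n * (exp (anc_growth r * t) * anc_weight x))) \<longlonglongrightarrow> ennreal 0"
    by (intro tendsto_ennrealI) simp
  then show ?thesis unfolding anc_tail_bound_def by (simp add: mult.assoc)
qed

lemma anc_tail_bound_step:
  assumes r': "0 \<le> r'" "r' \<le> r" and Q: "0 < anc_total_rate r x"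
  shows "(\<Sum>i<5. ennreal (fst (anc_moves r' x ! i)) *
      (\<integral>\<^sup>+h. indicator {0..} h * ennreal (exp (- anc_total_rate r x * h))
         * anc_tail_bound r n (fst (snd (anc_moves r' x ! i))) (t - h) \<partial>lborel))
    \<le> anc_tail_bound r (Suc n) x t"
proof -
  let ?y = "\<lambda>i. fst (snd (anc_moves r' x ! i))"
  define D where "D = anc_total_rate r x + anc_growth r"
  define C where "C = (3/4)^n * exp (anc_growth r * t) / D"
  have D: "0 < D" using Q anc_growth_ge_1[of r] r' unfolding D_def by simp
  have C: "0 \<le> C" using D unfolding C_def by simp
  have rate: "0 \<le> fst (anc_moves r' x ! i)" if "i < 5" for i using anc_moves_rate_nonneg[OF r'(1) that] .
  have "(\<integral>\<^sup>+h. indicator {0..} h * ennreal (exp (- anc_total_rate r x * h))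
         * anc_tail_bound r n (?y i) (t - h) \<partial>lborel) = ennreal (C * anc_weight (?y i))" for i
    using nn_integral_exp_neg_mult_exp[of "(3/4)^n * anc_weight (?y i)" "anc_total_rate r x" "anc_growth r" t] D
    by (simp add: anc_tail_bound_def C_def D_def less_imp_le[OF anc_weight_pos] mult_ac)
  then have "(\<Sum>i<5. ennreal (fst (anc_moves r' x ! i)) *
      (\<integral>\<^sup>+h. indicator {0..} h * ennreal (exp (- anc_total_rate r x * h))
         * anc_tail_bound r n (?y i) (t - h) \<partial>lborel))
    = ennreal (C * (\<Sum>i<5. fst (anc_moves r' x ! i) * anc_weight (?y i)))"
    using rate C
    by (simp add: sum_distrib_left ennreal_mult[symmetric] mult_ac less_imp_le[OF anc_weight_pos])
      (rule sum_ennreal, simp add: less_imp_le[OF anc_weight_pos])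
  also have "\<dots> \<le> ennreal (C * (3/4 * D * anc_weight x))"
    using anc_weight_drift[OF r', of x] C by (intro ennreal_leI mult_left_mono) (simp_all add: D_def)
  also have "\<dots> = anc_tail_bound r (Suc n) x t"
    using D unfolding anc_tail_bound_def C_def by (simp add: field_simps)
  finally show ?thesis .
qed

lemma anc_tail_bound_step_interval:
  assumes "0 \<le> r'" "r' \<le> r" "0 < anc_total_rate r x"
  shows "(\<Sum>i<5. ennreal (fst (anc_moves r' x ! i)) *
      (\<integral>\<^sup>+h. indicator {0..t} h * ennreal (exp (- anc_total_rate r x * h))
         * anc_tail_bound r n (fst (snd (anc_moves r' x ! i))) (t - h) \<partial>lborel))
    \<le> anc_tail_bound r (Suc n) x t"
  by (rule order_trans[OF _ anc_tail_bound_step[OF assms]])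
    (intro sum_mono mult_left_mono nn_integral_mono, auto simp: indicator_def)

lemma anc_tail_bound_step_absorbing:
  assumes r: "0 \<le> r"
  shows "(\<integral>\<^sup>+h. indicator {0..} h * ennreal (exp (- h)) * anc_tail_bound r n x (t - h) \<partial>lborel)
     \<le> anc_tail_bound r (Suc n) x t"
proof -
  let ?C = "(3/4)^n * anc_weight x * exp (anc_growth r * t)"
  have C: "0 \<le> ?C" using anc_weight_pos[of x] by simp
  have "(\<integral>\<^sup>+h. indicator {0..} h * ennreal (exp (- h)) * anc_tail_bound r n x (t - h) \<partial>lborel)
      = ennreal (?C / (1 + anc_growth r))"
    using nn_integral_exp_neg_mult_exp[of "(3/4)^n * anc_weight x" 1 "anc_growth r" t]
      anc_growth_ge_1[OF r] anc_weight_ge_1[of x]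
    by (simp add: anc_tail_bound_def mult_ac)
  also have "\<dots> \<le> ennreal (?C * (3/4))"
  proof (rule ennreal_leI)
    have "?C * 1 \<le> ?C * (3/4 * (1 + anc_growth r))"
      using anc_growth_ge_1[OF r] C by (intro mult_left_mono) auto
    then show "?C / (1 + anc_growth r) \<le> ?C * (3/4)"
      using anc_growth_ge_1[OF r] by (simp add: pos_divide_le_eq algebra_simps)
  qed
  also have "\<dots> = anc_tail_bound r (Suc n) x t"
    unfolding anc_tail_bound_def by (simp add: mult_ac)
  finally show ?thesis .
qed

lemma emeasure_anc_jtime_Suc:
  "emeasure anc_Omega {\<omega>. anc_jtime r x \<omega> (Suc n) \<le> t} = (\<integral>\<^sup>+z. emeasure anc_Omega
     {\<omega>. anc_jtime r (fst (anc_step r x z)) \<omega> n \<le> t - fst (snd (anc_step r x z))} \<partial>anc_noise)"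
proof -
  have "emeasure anc_Omega {\<omega>. anc_jtime r x \<omega> (Suc n) \<le> t}
      = (\<integral>\<^sup>+z. \<integral>\<^sup>+\<omega>. indicator {\<omega>. anc_jtime r x \<omega> (Suc n) \<le> t} (case_nat z \<omega>) \<partial>anc_Omega \<partial>anc_noise)"
    by (subst nn_integral_indicator[symmetric]) (simp, rule nn_integral_anc_Omega_case_nat, measurable)
  also have "\<dots> = (\<integral>\<^sup>+z. emeasure anc_Omega
      {\<omega>. anc_jtime r (fst (anc_step r x z)) \<omega> n \<le> t - fst (snd (anc_step r x z))} \<partial>anc_noise)"
  proof (intro nn_integral_cong)
    fix z
    have "(\<lambda>\<omega>. indicator {\<omega>. anc_jtime r x \<omega> (Suc n) \<le> t} (case_nat z \<omega>) :: ennreal)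
      = indicator {\<omega>. anc_jtime r (fst (anc_step r x z)) \<omega> n \<le> t - fst (snd (anc_step r x z))}"
      by (auto simp: fun_eq_iff indicator_def anc_jtime_case_nat_Suc algebra_simps)
    then show "(\<integral>\<^sup>+\<omega>. indicator {\<omega>. anc_jtime r x \<omega> (Suc n) \<le> t} (case_nat z \<omega>) \<partial>anc_Omega)
      = emeasure anc_Omega {\<omega>. anc_jtime r (fst (anc_step r x z)) \<omega> n \<le> t - fst (snd (anc_step r x z))}"
      by simp
  qed
  finally show ?thesis .
qed

lemma emeasure_anc_jtime_le:
  assumes r: "0 \<le> r"
  shows "emeasure anc_Omega {\<omega>. anc_jtime r x \<omega> n \<le> t} \<le> anc_tail_bound r n x t"
proof (induction n arbitrary: x t)
  case 0
  show ?case
  proof (cases "0 \<le> t")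
    case True
    have "emeasure anc_Omega {\<omega>. anc_jtime r x \<omega> 0 \<le> t} \<le> 1" by (rule anc_Omega.emeasure_le_1)
    also have "1 \<le> anc_tail_bound r 0 x t" using r True by (rule anc_tail_bound_0_ge_1)
    finally show ?thesis .
  qed (simp add: anc_jtime_def)
next
  case (Suc n)
  let ?g = "\<lambda>p. anc_tail_bound r n (fst p) (t - fst (snd p))"
  have [measurable]: "?g \<in> borel_measurable (count_space UNIV \<Otimes>\<^sub>M borel \<Otimes>\<^sub>M count_space UNIV)"
    by (rule borel_measurable_countable_fst) measurable
  have "emeasure anc_Omega {\<omega>. anc_jtime r x \<omega> (Suc n) \<le> t} \<le> (\<integral>\<^sup>+z. ?g (anc_step r x z) \<partial>anc_noise)"
    unfolding emeasure_anc_jtime_Suc by (intro nn_integral_mono) (simp add: Suc.IH)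
  also have "\<dots> \<le> anc_tail_bound r (Suc n) x t"
  proof (cases "0 < anc_total_rate r x")
    case True
    then show ?thesis
      using anc_tail_bound_step[OF r order_refl True] by (subst nn_integral_anc_step[OF r True]) simp_all
  next
    case False
    then show ?thesis
      using anc_tail_bound_step_absorbing[OF r] by (subst nn_integral_anc_step_absorbing) simp_all
  qed
  finally show ?case .
qed

lemma AE_anc_nonexplosive:
  assumes r: "0 \<le> r"
  shows "AE \<omega> in anc_Omega. \<exists>k. t < anc_jtime r x \<omega> (Suc k)"
proof (rule AE_I)
  let ?S = "{\<omega>. \<forall>k. anc_jtime r x \<omega> (Suc k) \<le> t}"
  show "{\<omega> \<in> space anc_Omega. \<not> (\<exists>k. t < anc_jtime r x \<omega> (Suc k))} \<subseteq> ?S"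
    by (auto simp: not_less)
  show "?S \<in> sets anc_Omega"
  proof -
    have "{\<omega> \<in> space anc_Omega. \<forall>k. anc_jtime r x \<omega> (Suc k) \<le> t} \<in> sets anc_Omega" by measurable
    then show ?thesis by (simp add: space_anc_Omega)
  qed
  have bound: "emeasure anc_Omega ?S \<le> anc_tail_bound r (Suc n) x t" for n
  proof -
    have "emeasure anc_Omega ?S \<le> emeasure anc_Omega {\<omega>. anc_jtime r x \<omega> (Suc n) \<le> t}"
      by (intro emeasure_mono) auto
    also have "\<dots> \<le> anc_tail_bound r (Suc n) x t" by (rule emeasure_anc_jtime_le[OF r])
    finally show ?thesis .
  qed
  have "emeasure anc_Omega ?S \<le> 0"
    by (rule LIMSEQ_le_const[OF LIMSEQ_Suc[OF anc_tail_bound_tendsto_0]]) (use bound in auto)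
  then show "emeasure anc_Omega ?S = 0" by simp
qed

lemma measurable_anc_index_pair [measurable]:
  "(\<lambda>p. anc_index r x (fst p) (snd p)) \<in> anc_Omega \<Otimes>\<^sub>M borel \<rightarrow>\<^sub>M count_space UNIV"
  unfolding anc_index_def by measurable

lemma measurable_anc_chain_pair [measurable]:
  "(\<lambda>p. anc_chain r x (fst p) (snd p)) \<in> anc_Omega \<Otimes>\<^sub>M borel \<rightarrow>\<^sub>M count_space UNIV"
proof -
  have "(\<lambda>p. (\<lambda>k p. anc_path r x (fst p) k) (anc_index r x (fst p) (snd p)) p)
      \<in> anc_Omega \<Otimes>\<^sub>M borel \<rightarrow>\<^sub>M count_space UNIV"
    by (rule measurable_compose_countable[OF _ measurable_anc_index_pair]) measurable
  then show ?thesis unfolding anc_chain_def by simp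
qed

lemma measurable_anc_c_pair [measurable]:
  "(\<lambda>p. anc_c r x (fst p) (snd p)) \<in> anc_Omega \<Otimes>\<^sub>M borel \<rightarrow>\<^sub>M count_space UNIV"
proof -
  have "(\<lambda>p. (\<lambda>y p. snd (snd y)) (anc_chain r x (fst p) (snd p)) p)
      \<in> anc_Omega \<Otimes>\<^sub>M borel \<rightarrow>\<^sub>M count_space UNIV"
    by (rule measurable_compose_countable[OF _ measurable_anc_chain_pair]) measurable
  then show ?thesis unfolding anc_c_def by simp
qed

lemma measurable_anc_c_time [measurable]: "(\<lambda>u. anc_c r x \<omega> u) \<in> borel \<rightarrow>\<^sub>M count_space UNIV"
proof -
  have "(\<lambda>u. (\<lambda>k u. snd (snd (anc_path r x \<omega> k))) (anc_index r x \<omega> u) u) \<in> borel \<rightarrow>\<^sub>M count_space UNIV"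
    by (rule measurable_compose_countable) (unfold anc_index_def, measurable)
  then show ?thesis unfolding anc_c_def anc_chain_def by simp
qed

lemma power_card_eq_prod: "(a::real) ^ card {k. k < (i::nat) \<and> P k} = (\<Prod>k<i. if P k then a else 1)"
proof (induction i)
  case (Suc i)
  have "{k. k < Suc i \<and> P k} = (if P i then insert i else id) {k. k < i \<and> P k}"
    by (auto simp: less_Suc_eq)
  then show ?case using Suc by simp
qed simp

lemma measurable_power_anc_s_pair [measurable]:
  "(\<lambda>p. (a::real) ^ anc_s r x (fst p) (snd p)) \<in> borel_measurable (anc_Omega \<Otimes>\<^sub>M borel)"
proof -
  have "(\<lambda>p. (\<lambda>i p. (\<Prod>k<i. if anc_recomb r x (fst p) k then a else 1)) (anc_index r x (fst p) (snd p)) p)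
      \<in> borel_measurable (anc_Omega \<Otimes>\<^sub>M borel)"
    by (rule measurable_compose_countable[OF _ measurable_anc_index_pair]) measurable
  then show ?thesis unfolding anc_s_def power_card_eq_prod by simp
qed

definition anc_occupation :: "real \<Rightarrow> anc_state \<Rightarrow> (nat \<Rightarrow> real \<times> real) \<Rightarrow> real \<Rightarrow> ennreal" where
  "anc_occupation r x \<omega> t = (\<integral>\<^sup>+u. indicator {0..t} u * ennreal (real (anc_c r x \<omega> u)) \<partial>lborel)"

lemma set_integral_anc_c_eq:
  "(LINT u:{0..t}|lborel. real (anc_c r x \<omega> u)) = enn2real (anc_occupation r x \<omega> t)"
  unfolding set_lebesgue_integral_def anc_occupation_def
  by (subst integral_eq_nn_integral) (auto simp: ennreal_mult' ennreal_indicator mult.commute)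

lemma measurable_anc_occupation_pair [measurable]:
  "(\<lambda>p. anc_occupation r x (fst p) (snd p)) \<in> borel_measurable (anc_Omega \<Otimes>\<^sub>M borel)"
proof -
  let ?M = "(anc_Omega \<Otimes>\<^sub>M borel) \<Otimes>\<^sub>M lborel"
  let ?f = "\<lambda>q. if 0 \<le> snd q \<and> snd q \<le> snd (fst q)
              then ennreal (real (anc_c r x (fst (fst q)) (snd q))) else 0"
  have "sets ?M = sets ((anc_Omega \<Otimes>\<^sub>M borel) \<Otimes>\<^sub>M borel)"
    by (intro sets_pair_measure_cong) auto
  moreover have "?f \<in> borel_measurable ((anc_Omega \<Otimes>\<^sub>M borel) \<Otimes>\<^sub>M borel)"
  proof -
    have "(\<lambda>q. (fst (fst q), snd q)) \<in> (anc_Omega \<Otimes>\<^sub>M borel) \<Otimes>\<^sub>M borel \<rightarrow>\<^sub>M anc_Omega \<Otimes>\<^sub>M borel"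
      by measurable
    from measurable_compose[OF this measurable_anc_c_pair]
    have "(\<lambda>q. anc_c r x (fst (fst q)) (snd q)) \<in> (anc_Omega \<Otimes>\<^sub>M borel) \<Otimes>\<^sub>M borel \<rightarrow>\<^sub>M count_space UNIV"
      by simp
    then show ?thesis by measurable
  qed
  ultimately have "?f \<in> borel_measurable ?M" by (simp cong: measurable_cong_sets)
  moreover have "(\<lambda>p. anc_occupation r x (fst p) (snd p)) = (\<lambda>p. \<integral>\<^sup>+u. ?f (p, u) \<partial>lborel)"
    unfolding anc_occupation_def by (auto simp: fun_eq_iff indicator_def intro!: nn_integral_cong)
  ultimately show ?thesis using lborel.borel_measurable_nn_integral_fst[of ?f] by simp
qed

lemma anc_occupation_const:
  assumes "\<And>u. 0 \<le> u \<Longrightarrow> u \<le> t \<Longrightarrow> anc_c r x \<omega> u = C" "0 \<le> t"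
  shows "anc_occupation r x \<omega> t = ennreal (real C * t)"
proof -
  have "anc_occupation r x \<omega> t = (\<integral>\<^sup>+u. ennreal (real C) * indicator {0..t} u \<partial>lborel)"
    unfolding anc_occupation_def using assms(1) by (intro nn_integral_cong) (auto simp: indicator_def)
  also have "\<dots> = ennreal (real C) * ennreal t"
    using assms(2) by (subst nn_integral_cmult_indicator) auto
  finally show ?thesis using assms(2) by (simp add: ennreal_mult)
qed

lemma anc_occupation_finite:
  assumes "\<exists>k. t < anc_jtime r x \<omega> (Suc k)"
  shows "anc_occupation r x \<omega> t < \<infinity>"
proof -
  define M where "M = Max ((\<lambda>k. snd (snd (anc_path r x \<omega> k))) ` {..anc_index r x \<omega> t})"
  have "anc_c r x \<omega> u \<le> M" if "u \<le> t" for u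
  proof -
    have "anc_index r x \<omega> u \<le> anc_index r x \<omega> t" by (rule anc_index_mono[OF that assms])
    then show ?thesis unfolding M_def anc_c_def anc_chain_def by (intro Max_ge) auto
  qed
  then have "anc_occupation r x \<omega> t \<le> (\<integral>\<^sup>+u. ennreal (real M) * indicator {0..t} u \<partial>lborel)"
    unfolding anc_occupation_def by (intro nn_integral_mono) (auto simp: indicator_def)
  also have "\<dots> < \<infinity>"
    by (subst nn_integral_cmult_indicator) (auto simp: ennreal_mult_less_top emeasure_lborel_Icc_eq)
  finally show ?thesis .
qed

lemma anc_occupation_after_jump:
  fixes r :: real and x :: anc_state and z :: "real \<times> real" and \<omega> :: "nat \<Rightarrow> real \<times> real"
  defines "y \<equiv> fst (anc_step r x z)" and "h \<equiv> fst (snd (anc_step r x z))"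
  assumes h: "0 \<le> h" "h \<le> t" and nonexpl: "\<exists>k. t - h < anc_jtime r y \<omega> (Suc k)"
  shows "anc_occupation r x (case_nat z \<omega>) t = ennreal (real (snd (snd x)) * h) + anc_occupation r y \<omega> (t - h)"
proof -
  have split: "indicator {0..t} u * ennreal (real (anc_c r x (case_nat z \<omega>) u)) =
     indicator {0..<h} u * ennreal (real (snd (snd x)))
     + indicator {h..t} u * ennreal (real (anc_c r y \<omega> (u - h)))" for u
  proof -
    consider "0 \<le> u" "u < h" | "h \<le> u" "u \<le> t" | "u < 0 \<or> t < u" by linarith
    then show ?thesis
    proof cases
      case 1
      then show ?thesis using h anc_chain_before_jump[of u r x z \<omega>]
        by (auto simp: indicator_def anc_c_def h_def)
    next
      case 2
      then have "\<exists>k. u - h < anc_jtime r y \<omega> (Suc k)" using nonexpl by (meson diff_right_mono le_less_trans)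
      then show ?thesis using 2 h anc_chain_after_jump[of r x z u \<omega>]
        by (auto simp: indicator_def anc_c_def y_def h_def)
    qed (use h in \<open>auto simp: indicator_def\<close>)
  qed
  have shift: "(\<integral>\<^sup>+u. indicator {h..t} u * ennreal (real (anc_c r y \<omega> (u - h))) \<partial>lborel)
      = anc_occupation r y \<omega> (t - h)"
  proof -
    have "(\<integral>\<^sup>+u. indicator {h..t} u * ennreal (real (anc_c r y \<omega> (u - h))) \<partial>lborel)
      = ennreal \<bar>1\<bar> * (\<integral>\<^sup>+s. indicator {h..t} (h + 1 * s) * ennreal (real (anc_c r y \<omega> (h + 1 * s - h))) \<partial>lborel)"
      by (rule nn_integral_real_affine) measurable
    then show ?thesis
      unfolding anc_occupation_def by (auto intro!: nn_integral_cong simp: indicator_def)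
  qed
  have "anc_occupation r x (case_nat z \<omega>) t
      = (\<integral>\<^sup>+u. indicator {0..<h} u * ennreal (real (snd (snd x))) \<partial>lborel)
      + (\<integral>\<^sup>+u. indicator {h..t} u * ennreal (real (anc_c r y \<omega> (u - h))) \<partial>lborel)"
    unfolding anc_occupation_def split by (rule nn_integral_add) measurable
  also have "\<dots> = ennreal (real (snd (snd x)) * h) + anc_occupation r y \<omega> (t - h)"
    using h by (simp add: shift nn_integral_cmult_indicator mult.commute ennreal_mult)
  finally show ?thesis .
qed

section \<open>Expected payoffs and the first-jump decomposition\<close>

text \<open>Both sides of the theorem are expectations of such payoffs: the left one with parameters
  \<open>(\<rho>, v, 0)\<close>, the right one with \<open>(v \<rho>, 1, \<rho> (1 - v) / 2)\<close>.\<close>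
definition anc_payoff :: "real \<Rightarrow> real \<Rightarrow> real \<Rightarrow> (anc_state \<Rightarrow> real) \<Rightarrow> anc_state
    \<Rightarrow> (nat \<Rightarrow> real \<times> real) \<Rightarrow> real \<Rightarrow> real" where
  "anc_payoff r v \<gamma> f x \<omega> t = f (anc_chain r x \<omega> t) * v ^ anc_s r x \<omega> t
     * exp (- \<gamma> * (LINT u:{0..t}|lborel. real (anc_c r x \<omega> u)))"

definition anc_expect :: "real \<Rightarrow> real \<Rightarrow> real \<Rightarrow> (anc_state \<Rightarrow> real) \<Rightarrow> anc_state \<Rightarrow> real \<Rightarrow> ennreal" where
  "anc_expect r v \<gamma> f x t = (\<integral>\<^sup>+\<omega>. ennreal (anc_payoff r v \<gamma> f x \<omega> t) \<partial>anc_Omega)"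

lemma anc_payoff_eq: "anc_payoff r v \<gamma> f x \<omega> t
   = f (anc_chain r x \<omega> t) * v ^ anc_s r x \<omega> t * exp (- \<gamma> * enn2real (anc_occupation r x \<omega> t))"
  unfolding anc_payoff_def set_integral_anc_c_eq ..

lemma measurable_anc_payoff_pair [measurable]:
  "(\<lambda>p. anc_payoff r v \<gamma> f x (fst p) (snd p)) \<in> borel_measurable (anc_Omega \<Otimes>\<^sub>M borel)"
proof -
  have "(\<lambda>p. f (anc_chain r x (fst p) (snd p))) \<in> borel_measurable (anc_Omega \<Otimes>\<^sub>M borel)"
    by (rule measurable_compose[OF measurable_anc_chain_pair]) simp
  then show ?thesis unfolding anc_payoff_eq by measurable
qed

lemma measurable_anc_payoff [measurable]: "(\<lambda>\<omega>. anc_payoff r v \<gamma> f x \<omega> t) \<in> borel_measurable anc_Omega"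
  using measurable_compose[OF measurable_Pair2'[of t borel anc_Omega] measurable_anc_payoff_pair] by simp

lemma measurable_anc_expect [measurable]: "anc_expect r v \<gamma> f x \<in> borel_measurable borel"
proof -
  have "(\<lambda>(t, \<omega>). ennreal (anc_payoff r v \<gamma> f x \<omega> t)) \<in> borel_measurable (borel \<Otimes>\<^sub>M anc_Omega)"
    by (subst measurable_pair_swap_iff) (simp add: case_prod_beta')
  then show ?thesis
    unfolding anc_expect_def[abs_def] by (rule anc_Omega.borel_measurable_nn_integral)
qed

lemma anc_payoff_nonneg: "(\<And>y. 0 \<le> f y) \<Longrightarrow> 0 \<le> v \<Longrightarrow> 0 \<le> anc_payoff r v \<gamma> f x \<omega> t"
  unfolding anc_payoff_def by simp

lemma anc_expect_le_1:
  assumes f: "\<And>y. 0 \<le> f y" "\<And>y. f y \<le> 1" and v: "0 \<le> v" "v \<le> 1" and \<gamma>: "0 \<le> \<gamma>"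
  shows "anc_expect r v \<gamma> f x t \<le> 1"
proof -
  have "anc_payoff r v \<gamma> f x \<omega> t \<le> 1" for \<omega>
  proof -
    have "exp (- \<gamma> * enn2real (anc_occupation r x \<omega> t)) \<le> 1" using \<gamma> by simp
    moreover have "v ^ anc_s r x \<omega> t \<le> 1" using v by (simp add: power_le_one)
    ultimately show ?thesis unfolding anc_payoff_eq using f v
      by (metis mult_le_one exp_ge_zero zero_le_power)
  qed
  then have "anc_expect r v \<gamma> f x t \<le> (\<integral>\<^sup>+\<omega>. 1 \<partial>anc_Omega)"
    unfolding anc_expect_def by (intro nn_integral_mono) simp
  then show ?thesis by (simp add: anc_Omega.emeasure_space_1)
qed

lemma anc_payoff_before_jump:
  assumes t: "0 \<le> t" "t < fst (snd (anc_step r x z))"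
  shows "anc_payoff r v \<gamma> f x (case_nat z \<omega>) t = f x * exp (- \<gamma> * (real (snd (snd x)) * t))"
proof -
  have chain: "anc_chain r x (case_nat z \<omega>) u = x" if "u \<le> t" for u
    using anc_chain_before_jump[of u r x z \<omega>] t that by simp
  then have "anc_occupation r x (case_nat z \<omega>) t = ennreal (real (snd (snd x)) * t)"
    using t by (intro anc_occupation_const) (auto simp: anc_c_def)
  then show ?thesis
    unfolding anc_payoff_eq using chain[of t] anc_s_before_jump[of t r x z \<omega>] t by simp
qed

lemma anc_payoff_after_jump:
  fixes r :: real and x :: anc_state and z :: "real \<times> real" and \<omega> :: "nat \<Rightarrow> real \<times> real"
  defines "y \<equiv> fst (anc_step r x z)" and "h \<equiv> fst (snd (anc_step r x z))"
    and "b \<equiv> snd (snd (anc_step r x z))"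
  assumes h: "0 \<le> h" "h \<le> t" and nonexpl: "\<exists>k. t - h < anc_jtime r y \<omega> (Suc k)"
  shows "anc_payoff r v \<gamma> f x (case_nat z \<omega>) t
     = v ^ (if b then 1 else 0) * exp (- \<gamma> * (real (snd (snd x)) * h)) * anc_payoff r v \<gamma> f y \<omega> (t - h)"
proof -
  have "anc_occupation r y \<omega> (t - h) < \<infinity>" by (rule anc_occupation_finite[OF nonexpl])
  then have "enn2real (anc_occupation r x (case_nat z \<omega>) t)
      = real (snd (snd x)) * h + enn2real (anc_occupation r y \<omega> (t - h))"
    using anc_occupation_after_jump[of r x z t \<omega>] h nonexpl
    by (simp add: y_def h_def enn2real_plus)
  moreover have "anc_chain r x (case_nat z \<omega>) t = anc_chain r y \<omega> (t - h)"
    using anc_chain_after_jump[of r x z t \<omega>] h nonexpl by (simp add: y_def h_def)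
  moreover have "anc_s r x (case_nat z \<omega>) t = (if b then 1 else 0) + anc_s r y \<omega> (t - h)"
    using anc_s_after_jump[of r x z t \<omega>] h nonexpl by (simp add: y_def h_def b_def)
  ultimately show ?thesis
    unfolding anc_payoff_eq by (simp add: power_add mult_ac distrib_left exp_add[symmetric])
qed

lemma AE_anc_noise_nonneg: "AE z in anc_noise. 0 \<le> snd z"
proof (rule AE_I)
  show "{z \<in> space anc_noise. \<not> 0 \<le> snd z} \<subseteq> UNIV \<times> {..<0}" by auto
  show "UNIV \<times> {..<0::real} \<in> sets anc_noise" unfolding sets_anc_noise by auto
  have "AE e in Expo. 0 \<le> e"
    by (subst AE_density) (auto simp: exponential_density_def intro!: AE_I2)
  then have "emeasure Expo {..<0} = 0"
    by (subst (asm) AE_iff_measurable[where N="{..<0}"]) auto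
  then show "emeasure anc_noise (UNIV \<times> {..<0::real}) = 0"
    unfolding anc_noise_def
    by (subst Expo.emeasure_pair_measure_Times)
      (auto simp: Unif.emeasure_space_1[simplified space_lborel space_uniform_measure])
qed

lemma anc_step_hold_nonneg: "0 \<le> snd z \<Longrightarrow> 0 \<le> anc_total_rate r x \<Longrightarrow> 0 \<le> fst (snd (anc_step r x z))"
  by (cases z) (auto simp: anc_step_eq Let_def)

text \<open>Conditional expected payoff given the first step \<open>(y, h, b)\<close> of the chain.\<close>
definition anc_restart :: "real \<Rightarrow> real \<Rightarrow> real \<Rightarrow> (anc_state \<Rightarrow> real) \<Rightarrow> anc_state \<Rightarrow> real
    \<Rightarrow> anc_state \<times> real \<times> bool \<Rightarrow> ennreal" where
  "anc_restart r v \<gamma> f x t p = (if t < fst (snd p)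
     then ennreal (f x * exp (- \<gamma> * (real (snd (snd x)) * t)))
     else ennreal (v ^ (if snd (snd p) then 1 else 0) * exp (- \<gamma> * (real (snd (snd x)) * fst (snd p))))
          * anc_expect r v \<gamma> f (fst p) (t - fst (snd p)))"

lemma measurable_anc_restart [measurable]:
  "anc_restart r v \<gamma> f x t \<in> borel_measurable (count_space UNIV \<Otimes>\<^sub>M borel \<Otimes>\<^sub>M count_space UNIV)"
proof -
  have [measurable]: "(\<lambda>p. anc_expect r v \<gamma> f (fst p) (t - fst (snd p)))
      \<in> borel_measurable (count_space UNIV \<Otimes>\<^sub>M borel \<Otimes>\<^sub>M count_space UNIV)"
    by (rule borel_measurable_countable_fst[where g="\<lambda>y q. anc_expect r v \<gamma> f y (t - fst q)"]) measurable
  show ?thesis unfolding anc_restart_def[abs_def] by measurable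
qed

context
  fixes r v \<gamma> :: real and f :: "anc_state \<Rightarrow> real"
  assumes r: "0 \<le> r" and v: "0 \<le> v" and f: "\<And>y. 0 \<le> f y"
begin

lemma anc_expect_first_jump:
  assumes t: "0 \<le> t"
  shows "anc_expect r v \<gamma> f x t = (\<integral>\<^sup>+z. anc_restart r v \<gamma> f x t (anc_step r x z) \<partial>anc_noise)"
proof -
  have "anc_expect r v \<gamma> f x t
      = (\<integral>\<^sup>+z. \<integral>\<^sup>+\<omega>. ennreal (anc_payoff r v \<gamma> f x (case_nat z \<omega>) t) \<partial>anc_Omega \<partial>anc_noise)"
    unfolding anc_expect_def by (rule nn_integral_anc_Omega_case_nat) measurable
  also have "\<dots> = (\<integral>\<^sup>+z. anc_restart r v \<gamma> f x t (anc_step r x z) \<partial>anc_noise)"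
  proof (rule nn_integral_cong_AE)
    show "AE z in anc_noise. (\<integral>\<^sup>+\<omega>. ennreal (anc_payoff r v \<gamma> f x (case_nat z \<omega>) t) \<partial>anc_Omega)
        = anc_restart r v \<gamma> f x t (anc_step r x z)"
      using AE_anc_noise_nonneg
    proof eventually_elim
      case (elim z)
      define y h b where "y = fst (anc_step r x z)" and "h = fst (snd (anc_step r x z))"
        and "b = snd (snd (anc_step r x z))"
      define K where "K = v ^ (if b then 1 else 0) * exp (- \<gamma> * (real (snd (snd x)) * h))"
      have h: "0 \<le> h" unfolding h_def using elim r by (intro anc_step_hold_nonneg anc_total_rate_nonneg)
      show ?case
      proof (cases "t < h")
        case True
        then show ?thesis
          using anc_payoff_before_jump[OF t, of r x z v \<gamma> f] f
          by (simp add: h_def anc_restart_def anc_Omega.emeasure_space_1)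
      next
        case False
        have K: "0 \<le> K" using v by (simp add: K_def)
        have "AE \<omega> in anc_Omega. anc_payoff r v \<gamma> f x (case_nat z \<omega>) t = K * anc_payoff r v \<gamma> f y \<omega> (t - h)"
          using AE_anc_nonexplosive[OF r, of "t - h" y]
          by eventually_elim (use h False anc_payoff_after_jump in \<open>simp add: K_def y_def h_def b_def\<close>)
        then have "AE \<omega> in anc_Omega. ennreal (anc_payoff r v \<gamma> f x (case_nat z \<omega>) t)
            = ennreal K * ennreal (anc_payoff r v \<gamma> f y \<omega> (t - h))"
          by eventually_elim (simp add: ennreal_mult' K)
        then have "(\<integral>\<^sup>+\<omega>. ennreal (anc_payoff r v \<gamma> f x (case_nat z \<omega>) t) \<partial>anc_Omega)
            = (\<integral>\<^sup>+\<omega>. ennreal K * ennreal (anc_payoff r v \<gamma> f y \<omega> (t - h)) \<partial>anc_Omega)"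
          by (rule nn_integral_cong_AE)
        also have "\<dots> = ennreal K * anc_expect r v \<gamma> f y (t - h)"
          unfolding anc_expect_def by (rule nn_integral_cmult) measurable
        finally show ?thesis using False by (simp add: anc_restart_def K_def y_def h_def b_def)
      qed
    qed
  qed
  finally show ?thesis .
qed

lemma nn_integral_anc_restart:
  assumes Q: "0 < Q" and t: "0 \<le> t"
  shows "(\<integral>\<^sup>+h. indicator {0..} h * ennreal (exp (- Q * h)) * anc_restart r v \<gamma> f x t (y, h, b) \<partial>lborel)
    = ennreal (f x * exp (- \<gamma> * (real (snd (snd x)) * t)) * exp (- Q * t) / Q)
      + ennreal (v ^ (if b then 1 else 0)) * (\<integral>\<^sup>+h. indicator {0..t} h
          * ennreal (exp (- (Q + \<gamma> * real (snd (snd x))) * h)) * anc_expect r v \<gamma> f y (t - h) \<partial>lborel)"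
proof -
  let ?c = "real (snd (snd x))" and ?A = "f x * exp (- \<gamma> * (real (snd (snd x)) * t))"
  let ?E = "\<lambda>h. anc_expect r v \<gamma> f y (t - h)"
  have A: "0 \<le> ?A" using f by simp
  have split: "indicator {0..} h * ennreal (exp (- Q * h)) * anc_restart r v \<gamma> f x t (y, h, b)
     = ennreal ?A * (indicator {t<..} h * ennreal (exp (- Q * h)))
       + ennreal (v ^ (if b then 1 else 0))
         * (indicator {0..t} h * ennreal (exp (- (Q + \<gamma> * ?c) * h)) * ?E h)" for h
  proof -
    consider "h < 0" | "0 \<le> h" "h \<le> t" | "t < h" by linarith
    then show ?thesis
    proof cases
      case 2
      have "exp (- (Q + \<gamma> * ?c) * h) = exp (- Q * h) * exp (- \<gamma> * (?c * h))"
        by (simp add: exp_add[symmetric] algebra_simps)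
      then show ?thesis
        using 2 v by (simp add: anc_restart_def indicator_def ennreal_mult mult_ac)
    qed (use t in \<open>auto simp: anc_restart_def indicator_def mult.commute\<close>)
  qed
  have "(\<integral>\<^sup>+h. ennreal ?A * (indicator {t<..} h * ennreal (exp (- Q * h))) \<partial>lborel)
      = ennreal ?A * (\<integral>\<^sup>+h. indicator {t<..} h * ennreal (exp (- Q * h)) \<partial>lborel)"
    by (rule nn_integral_cmult) measurable
  also have "\<dots> = ennreal (?A * exp (- Q * t) / Q)"
    unfolding nn_integral_exp_neg_tail[OF Q t] using A by (simp add: ennreal_mult'[symmetric])
  finally show ?thesis
    unfolding split by (subst nn_integral_add, measurable, subst (2) nn_integral_cmult) measurable
qed

lemma anc_expect_renewal:
  assumes Q: "0 < anc_total_rate r x" and t: "0 \<le> t"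
  defines "R \<equiv> anc_total_rate r x + \<gamma> * real (snd (snd x))"
  shows "anc_expect r v \<gamma> f x t = ennreal (f x * exp (- R * t))
    + (\<Sum>i<5. ennreal (fst (anc_moves r x ! i) * v ^ (if snd (snd (anc_moves r x ! i)) then 1 else 0))
        * (\<integral>\<^sup>+h. indicator {0..t} h * ennreal (exp (- R * h))
            * anc_expect r v \<gamma> f (fst (snd (anc_moves r x ! i))) (t - h) \<partial>lborel))"
proof -
  let ?Q = "anc_total_rate r x"
  let ?A = "f x * exp (- \<gamma> * (real (snd (snd x)) * t)) * exp (- ?Q * t) / ?Q"
  have rate: "0 \<le> fst (anc_moves r x ! i)" if "i < 5" for i using anc_moves_rate_nonneg[OF r that] .
  have A: "0 \<le> ?A" using f Q by simp
  have "(\<Sum>i<5. ennreal (fst (anc_moves r x ! i)) * ennreal ?A)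
      = (\<Sum>i<5. ennreal (fst (anc_moves r x ! i))) * ennreal ?A"
    by (simp add: sum_distrib_right)
  also have "(\<Sum>i<5. ennreal (fst (anc_moves r x ! i))) = ennreal ?Q"
    using rate by (subst sum_ennreal) (auto simp: anc_total_rate_def)
  also have "ennreal ?Q * ennreal ?A = ennreal (?Q * ?A)"
    using Q by (simp add: ennreal_mult'[symmetric])
  also have "?Q * ?A = f x * exp (- R * t)"
    using Q by (simp add: R_def exp_add[symmetric] algebra_simps)
  finally have first: "(\<Sum>i<5. ennreal (fst (anc_moves r x ! i)) * ennreal ?A) = ennreal (f x * exp (- R * t))" .
  have "anc_expect r v \<gamma> f x t = (\<integral>\<^sup>+z. anc_restart r v \<gamma> f x t (anc_step r x z) \<partial>anc_noise)"
    by (rule anc_expect_first_jump[OF t])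
  also have "\<dots> = (\<Sum>i<5. ennreal (fst (anc_moves r x ! i)) * (ennreal ?A
      + ennreal (v ^ (if snd (snd (anc_moves r x ! i)) then 1 else 0)) * (\<integral>\<^sup>+h. indicator {0..t} h
          * ennreal (exp (- R * h)) * anc_expect r v \<gamma> f (fst (snd (anc_moves r x ! i))) (t - h) \<partial>lborel)))"
    unfolding nn_integral_anc_step[OF r Q measurable_anc_restart] R_def
    using nn_integral_anc_restart[OF Q t] by (simp add: mult_ac)
  also have "\<dots> = ennreal (f x * exp (- R * t))
    + (\<Sum>i<5. ennreal (fst (anc_moves r x ! i) * v ^ (if snd (snd (anc_moves r x ! i)) then 1 else 0))
        * (\<integral>\<^sup>+h. indicator {0..t} h * ennreal (exp (- R * h))
            * anc_expect r v \<gamma> f (fst (snd (anc_moves r x ! i))) (t - h) \<partial>lborel))"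
    unfolding distrib_left sum.distrib first using rate v by (simp add: ennreal_mult mult.assoc)
  finally show ?thesis .
qed

end

lemma anc_expect_absorbing:
  assumes Q: "anc_total_rate r x \<le> 0" and t: "0 \<le> t"
  shows "anc_expect r v \<gamma> f x t = ennreal (f x * exp (- \<gamma> * (real (snd (snd x)) * t)))"
proof -
  have chain: "anc_chain r x \<omega> u = x" for \<omega> u
    unfolding anc_chain_def using anc_path_absorbing[OF Q] by simp
  have "anc_s r x \<omega> u = 0" for \<omega> u
    unfolding anc_s_def anc_recomb_def using anc_path_absorbing[OF Q] anc_step_absorbing[OF Q] by simp
  moreover have "anc_occupation r x \<omega> t = ennreal (real (snd (snd x)) * t)" for \<omega>
    using chain t by (intro anc_occupation_const) (auto simp: anc_c_def)
  ultimately show ?thesis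
    using t by (simp add: anc_expect_def anc_payoff_eq chain anc_Omega.emeasure_space_1)
qed

section \<open>Uniqueness for the renewal equation\<close>

lemma anc_total_rate_scale:
  "anc_total_rate r x = anc_total_rate (v * r) x + r * (1 - v) / 2 * real (snd (snd x))"
  by (cases x) (simp add: anc_total_rate_eq field_simps)

lemma anc_moves_snd_scale: "i < 5 \<Longrightarrow> snd (anc_moves r x ! i) = snd (anc_moves r' x ! i)"
  by (cases x) (auto simp: anc_moves_def less_Suc_eq numeral_eq_Suc)

lemma anc_moves_rate_scale:
  "i < 5 \<Longrightarrow> fst (anc_moves (v * r) x ! i)
     = fst (anc_moves r x ! i) * v ^ (if snd (snd (anc_moves r x ! i)) then 1 else 0)"
  by (cases x) (auto simp: anc_moves_def less_Suc_eq numeral_eq_Suc)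

lemma renewal_compare:
  fixes F G B :: "anc_state \<Rightarrow> real \<Rightarrow> ennreal" and w :: "nat \<Rightarrow> ennreal" and y :: "nat \<Rightarrow> anc_state"
  assumes F: "F x t = A + (\<Sum>i<5. w i * (\<integral>\<^sup>+h. indicator {0..t} h * ennreal (exp (- Q * h)) * F (y i) (t - h) \<partial>lborel))"
    and G: "G x t = A + (\<Sum>i<5. w i * (\<integral>\<^sup>+h. indicator {0..t} h * ennreal (exp (- Q * h)) * G (y i) (t - h) \<partial>lborel))"
    and le: "\<And>y s. 0 \<le> s \<Longrightarrow> F y s \<le> G y s + B y s"
    and [measurable]: "\<And>y. G y \<in> borel_measurable borel" "\<And>y. B y \<in> borel_measurable borel"
  shows "F x t \<le> G x t + (\<Sum>i<5. w i * (\<integral>\<^sup>+h. indicator {0..t} h * ennreal (exp (- Q * h)) * B (y i) (t - h) \<partial>lborel))"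
proof -
  let ?K = "\<lambda>h. indicator {0..t} h * ennreal (exp (- Q * h))"
  have "?K h * F (y i) (t - h) \<le> ?K h * (G (y i) (t - h) + B (y i) (t - h))" for i h
    by (cases "h \<in> {0..t}") (auto intro!: mult_left_mono le)
  then have "(\<integral>\<^sup>+h. ?K h * F (y i) (t - h) \<partial>lborel)
      \<le> (\<integral>\<^sup>+h. ?K h * (G (y i) (t - h) + B (y i) (t - h)) \<partial>lborel)" for i
    by (intro nn_integral_mono)
  then have "F x t \<le> A + (\<Sum>i<5. w i * (\<integral>\<^sup>+h. ?K h * (G (y i) (t - h) + B (y i) (t - h)) \<partial>lborel))"
    unfolding F by (intro add_left_mono sum_mono mult_left_mono) simp_all
  also have "\<dots> = A + (\<Sum>i<5. w i * ((\<integral>\<^sup>+h. ?K h * G (y i) (t - h) \<partial>lborel)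
      + (\<integral>\<^sup>+h. ?K h * B (y i) (t - h) \<partial>lborel)))"
    by (simp add: distrib_left nn_integral_add)
  also have "\<dots> = G x t + (\<Sum>i<5. w i * (\<integral>\<^sup>+h. ?K h * B (y i) (t - h) \<partial>lborel))"
    unfolding G distrib_left sum.distrib by (simp add: add.assoc)
  finally show ?thesis .
qed

context
  fixes \<rho> v :: real and f :: "anc_state \<Rightarrow> real"
  assumes \<rho>: "0 < \<rho>" and v: "0 \<le> v" "v \<le> 1" and f: "\<And>y. 0 \<le> f y" "\<And>y. f y \<le> 1"
begin

abbreviation kill_rate :: real where "kill_rate \<equiv> \<rho> * (1 - v) / 2"

lemma kill_rate_nonneg: "0 \<le> kill_rate"
  using \<rho> v by simp

lemma scaled_rate_nonneg: "0 \<le> v * \<rho>"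
  using v \<rho> by simp

lemma scaled_rate_le: "v * \<rho> \<le> \<rho>"
  using v \<rho> by (simp add: mult_left_le_one_le)

text \<open>Weighting each recombination by \<open>v\<close> thins the recombination rate from \<open>\<rho>\<close> to \<open>v \<rho>\<close>.\<close>
lemma anc_expect_recomb_renewal:
  assumes Q: "0 < anc_total_rate \<rho> x" and t: "0 \<le> t"
  shows "anc_expect \<rho> v 0 f x t = ennreal (f x * exp (- anc_total_rate \<rho> x * t))
    + (\<Sum>i<5. ennreal (fst (anc_moves (v * \<rho>) x ! i)) * (\<integral>\<^sup>+h. indicator {0..t} h
        * ennreal (exp (- anc_total_rate \<rho> x * h))
        * anc_expect \<rho> v 0 f (fst (snd (anc_moves (v * \<rho>) x ! i))) (t - h) \<partial>lborel))"
  unfolding anc_expect_renewal[OF less_imp_le[OF \<rho>] v(1) f(1) Q t]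
  by (intro arg_cong2[where f="(+)"] sum.cong refl)
    (simp_all add: anc_moves_rate_scale anc_moves_snd_scale[of _ \<rho> x "v * \<rho>"])

text \<open>Killing at rate \<open>\<rho> (1 - v) / 2\<close> per lineage of type \<open>c\<close> restores the total rate \<open>\<rho>\<close>.\<close>
lemma anc_expect_killed_renewal:
  assumes Q: "0 < anc_total_rate (v * \<rho>) x" and t: "0 \<le> t"
  shows "anc_expect (v * \<rho>) 1 kill_rate f x t = ennreal (f x * exp (- anc_total_rate \<rho> x * t))
    + (\<Sum>i<5. ennreal (fst (anc_moves (v * \<rho>) x ! i)) * (\<integral>\<^sup>+h. indicator {0..t} h
        * ennreal (exp (- anc_total_rate \<rho> x * h))
        * anc_expect (v * \<rho>) 1 kill_rate f (fst (snd (anc_moves (v * \<rho>) x ! i))) (t - h) \<partial>lborel))"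
  unfolding anc_expect_renewal[OF scaled_rate_nonneg zero_le_one f(1) Q t]
  by (simp add: anc_total_rate_scale[of \<rho> x v] mult.commute)

lemma anc_expect_eq_absorbing:
  assumes Q: "anc_total_rate (v * \<rho>) x \<le> 0" and t: "0 \<le> t"
  shows "anc_expect \<rho> v 0 f x t = anc_expect (v * \<rho>) 1 kill_rate f x t"
proof -
  have Q0: "anc_total_rate (v * \<rho>) x = 0"
    using anc_total_rate_nonneg[OF scaled_rate_nonneg, of x] Q by linarith
  then have "(\<Sum>i<5. fst (anc_moves (v * \<rho>) x ! i)) = 0" by (simp add: anc_total_rate_def)
  then have rate: "fst (anc_moves (v * \<rho>) x ! i) = 0" if "i < 5" for i
    using that anc_moves_rate_nonneg[OF scaled_rate_nonneg] by (subst (asm) sum_nonneg_eq_0_iff) auto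
  have Q\<rho>: "anc_total_rate \<rho> x = kill_rate * real (snd (snd x))"
    using anc_total_rate_scale[of \<rho> x v] Q0 by simp
  show ?thesis
  proof (cases "0 < anc_total_rate \<rho> x")
    case True
    then show ?thesis using anc_expect_recomb_renewal[OF True t] anc_expect_absorbing[OF Q t] rate Q\<rho>
      by (simp add: mult_ac)
  next
    case False
    moreover have "0 \<le> kill_rate * real (snd (snd x))" using kill_rate_nonneg by simp
    ultimately have "kill_rate * real (snd (snd x)) = 0" using Q\<rho> by linarith
    then have "exp (- kill_rate * (real (snd (snd x)) * t)) = 1" by (simp add: mult.assoc[symmetric])
    then show ?thesis using anc_expect_absorbing[OF _ t, of \<rho> x] anc_expect_absorbing[OF Q t] False
      by auto
  qed
qed

text \<open>Both expectations solve the same renewal equation and are bounded by \<open>1\<close>, so they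
  differ by at most the \<open>n\<close>-fold iterated kernel applied to \<open>1\<close>, which the tail bound dominates.\<close>
lemma anc_expect_recomb_killed_le_tail:
  assumes "0 \<le> t"
  shows "anc_expect \<rho> v 0 f x t \<le> anc_expect (v * \<rho>) 1 kill_rate f x t + anc_tail_bound \<rho> n x t
    \<and> anc_expect (v * \<rho>) 1 kill_rate f x t \<le> anc_expect \<rho> v 0 f x t + anc_tail_bound \<rho> n x t"
  using assms
proof (induction n arbitrary: x t)
  case 0
  have "anc_expect \<rho> v 0 f x t \<le> 1" "anc_expect (v * \<rho>) 1 kill_rate f x t \<le> 1"
    using f v kill_rate_nonneg by (auto intro!: anc_expect_le_1)
  moreover have "1 \<le> anc_tail_bound \<rho> 0 x t"
    using \<rho> 0 by (intro anc_tail_bound_0_ge_1) auto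
  ultimately show ?case by (auto intro: order_trans add_increasing)
next
  case (Suc n)
  show ?case
  proof (cases "0 < anc_total_rate (v * \<rho>) x")
    case True
    have "0 \<le> kill_rate * real (snd (snd x))" using kill_rate_nonneg by simp
    then have Q: "0 < anc_total_rate \<rho> x" using anc_total_rate_scale[of \<rho> x v] True by linarith
    let ?B = "(\<Sum>i<5. ennreal (fst (anc_moves (v * \<rho>) x ! i)) * (\<integral>\<^sup>+h. indicator {0..t} h
        * ennreal (exp (- anc_total_rate \<rho> x * h))
        * anc_tail_bound \<rho> n (fst (snd (anc_moves (v * \<rho>) x ! i))) (t - h) \<partial>lborel))"
    have B: "?B \<le> anc_tail_bound \<rho> (Suc n) x t"
      by (rule anc_tail_bound_step_interval[OF scaled_rate_nonneg scaled_rate_le Q])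
    have "anc_expect \<rho> v 0 f x t \<le> anc_expect (v * \<rho>) 1 kill_rate f x t + ?B"
      by (rule renewal_compare[OF anc_expect_recomb_renewal[OF Q Suc.prems]
            anc_expect_killed_renewal[OF True Suc.prems]]) (use Suc.IH in auto)
    moreover have "anc_expect (v * \<rho>) 1 kill_rate f x t \<le> anc_expect \<rho> v 0 f x t + ?B"
      by (rule renewal_compare[OF anc_expect_killed_renewal[OF True Suc.prems]
            anc_expect_recomb_renewal[OF Q Suc.prems]]) (use Suc.IH in auto)
    ultimately show ?thesis using B by (meson add_left_mono order_trans)
  next
    case False
    then show ?thesis using anc_expect_eq_absorbing Suc.prems by (simp add: add_increasing2)
  qed
qed

lemma anc_expect_recomb_eq_killed:
  assumes t: "0 \<le> t"
  shows "anc_expect \<rho> v 0 f x t = anc_expect (v * \<rho>) 1 kill_rate f x t"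
proof -
  have lim: "(\<lambda>n. E + anc_tail_bound \<rho> n x t) \<longlonglongrightarrow> E + 0" for E :: ennreal
    by (intro tendsto_add tendsto_const anc_tail_bound_tendsto_0)
  have "anc_expect \<rho> v 0 f x t \<le> anc_expect (v * \<rho>) 1 kill_rate f x t + 0"
    by (rule LIMSEQ_le_const[OF lim]) (use anc_expect_recomb_killed_le_tail[OF t] in blast)
  moreover have "anc_expect (v * \<rho>) 1 kill_rate f x t \<le> anc_expect \<rho> v 0 f x t + 0"
    by (rule LIMSEQ_le_const[OF lim]) (use anc_expect_recomb_killed_le_tail[OF t] in blast)
  ultimately show ?thesis by simp
qed

end

theorem lemma5p1:
  fixes \<rho> v t p q g :: real and l m n :: nat
  assumes "\<rho> > 0" and "0 \<le> v" and "v \<le> 1"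
    and "(l, m, n) \<noteq> (0, 0, 0)" and "t \<ge> 0"
    and "0 \<le> p" and "p \<le> 1" and "0 \<le> q" and "q \<le> 1" and "0 \<le> g" and "g \<le> 1"
  shows "(\<integral>\<omega>. p ^ anc_a \<rho> (l, m, n) \<omega> t * q ^ anc_b \<rho> (l, m, n) \<omega> t
               * g ^ anc_c \<rho> (l, m, n) \<omega> t * v ^ anc_s \<rho> (l, m, n) \<omega> t \<partial>anc_Omega)
       = (\<integral>\<omega>. p ^ anc_a (v * \<rho>) (l, m, n) \<omega> t * q ^ anc_b (v * \<rho>) (l, m, n) \<omega> t
               * g ^ anc_c (v * \<rho>) (l, m, n) \<omega> t
               * exp (- (\<rho> * (1 - v) / 2) *
                      (LINT u:{0..t}|lborel. real (anc_c (v * \<rho>) (l, m, n) \<omega> u))) \<partial>anc_Omega)"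
proof -
  define f :: "anc_state \<Rightarrow> real" where "f y = p ^ fst y * q ^ fst (snd y) * g ^ snd (snd y)" for y
  have f: "0 \<le> f y" "f y \<le> 1" for y
    unfolding f_def using assms by (auto intro!: mult_le_one power_le_one)
  have "(\<integral>\<omega>. p ^ anc_a \<rho> (l, m, n) \<omega> t * q ^ anc_b \<rho> (l, m, n) \<omega> t
               * g ^ anc_c \<rho> (l, m, n) \<omega> t * v ^ anc_s \<rho> (l, m, n) \<omega> t \<partial>anc_Omega)
      = (\<integral>\<omega>. anc_payoff \<rho> v 0 f (l, m, n) \<omega> t \<partial>anc_Omega)"
    by (simp add: anc_payoff_def f_def anc_a_def anc_b_def anc_c_def)
  also have "\<dots> = enn2real (anc_expect \<rho> v 0 f (l, m, n) t)"
    unfolding anc_expect_def using assms(2) f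
    by (intro integral_eq_nn_integral AE_I2 anc_payoff_nonneg) auto
  also have "anc_expect \<rho> v 0 f (l, m, n) t = anc_expect (v * \<rho>) 1 (\<rho> * (1 - v) / 2) f (l, m, n) t"
    using assms f by (intro anc_expect_recomb_eq_killed) auto
  also have "enn2real \<dots> = (\<integral>\<omega>. anc_payoff (v * \<rho>) 1 (\<rho> * (1 - v) / 2) f (l, m, n) \<omega> t \<partial>anc_Omega)"
    unfolding anc_expect_def using f
    by (intro integral_eq_nn_integral[symmetric] AE_I2 anc_payoff_nonneg) auto
  also have "\<dots> = (\<integral>\<omega>. p ^ anc_a (v * \<rho>) (l, m, n) \<omega> t * q ^ anc_b (v * \<rho>) (l, m, n) \<omega> t
               * g ^ anc_c (v * \<rho>) (l, m, n) \<omega> t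
               * exp (- (\<rho> * (1 - v) / 2) *
                      (LINT u:{0..t}|lborel. real (anc_c (v * \<rho>) (l, m, n) \<omega> u))) \<partial>anc_Omega)"
    by (simp add: anc_payoff_def f_def anc_a_def anc_b_def anc_c_def)
  finally show ?thesis .
qed

end
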